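(* Let $q\ge1$, $k\ge2$ be integers and $\mathcal{A}$ as in the context. For the type-$\mathcal{A}$ random walk on $\mathbb{Z}^k$ let $\overline{R}_{n,k}=\frac1n(X_1X_2+\cdots+X_nX_{n+1})$. Then for every $\varepsilon>0$, $$\mathbb{V}(\overline{R}_{n,k})=O_{\mathcal{A},k,q,\varepsilon}(n^{-1/2+\varepsilon})\quad\text{as }n\to\infty.$$
   Context: $\mathcal{A}=\{\boldsymbol{\alpha}_1,\dots,\boldsymbol{\alpha}_q\}$ is a finite set of vectors $\boldsymbol{\alpha}_t=(\alpha_{t,1},\dots,\alpha_{t,k})$ with $0<\alpha_{t,j}<1$ for all $j$ and $\alpha_{t,1}+\cdots+\alpha_{t,k}=1$. For $\boldsymbol{\alpha}=(\alpha_1,\dots,\alpha_k)$ of this form, a type-$\boldsymbol{\alpha}$ step $\mathbf{w}(\boldsymbol{\alpha})$ is a random vector equal to the $j$-th standard basis vector of $\mathbb{Z}^k$ with probability $\alpha_j$. The type-$\mathcal{A}$ random walk is $\mathbf{p}_0=(0,\dots,0)$, $\mathbf{p}_i=\mathbf{p}_{i-1}+\mathbf{w}(\boldsymbol{\alpha}'_i)$ for $i\ge1$, where at each step a type $\boldsymbol{\alpha}'_i\in\mathcal{A}$ is chosen and the steps are independent. A lattice point $\mathbf{n}=(n_1,\dots,n_k)\in\mathbb{Z}^k$ is visible if there is no other lattice point on the segment joining it to the origin (equivalently $\gcd(n_1,\dots,n_k)=1$). $X_i=1$ if $\mathbf{p}_i$ is visible and $X_i=0$ otherwise. *)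

theory Defs
  imports "HOL-Probability.Probability"
begin

definition admissible_type :: "nat \<Rightarrow> (nat \<Rightarrow> real) \<Rightarrow> bool" where
  "admissible_type k \<alpha> \<longleftrightarrow> (\<forall>j<k. 0 < \<alpha> j \<and> \<alpha> j < 1) \<and> (\<Sum>j<k. \<alpha> j) = 1"

text \<open>A type-alpha step: the index j of the standard basis vector e_j, chosen with probability alpha_j.\<close>
definition step_pmf :: "nat \<Rightarrow> (nat \<Rightarrow> real) \<Rightarrow> nat pmf" where
  "step_pmf k \<alpha> = embed_pmf (\<lambda>j. if j < k then \<alpha> j else 0)"

text \<open>Joint law of the first m independent steps; the i-th step (i \<ge> 1) has type \<sigma> i.
  The outcome is the list [j_1, ..., j_m] of step directions.\<close>
fun steps_pmf :: "nat \<Rightarrow> (nat \<Rightarrow> nat \<Rightarrow> real) \<Rightarrow> nat \<Rightarrow> nat list pmf" where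
  "steps_pmf k \<sigma> 0 = return_pmf []"
| "steps_pmf k \<sigma> (Suc m) =
     bind_pmf (steps_pmf k \<sigma> m) (\<lambda>js. map_pmf (\<lambda>j. js @ [j]) (step_pmf k (\<sigma> (Suc m))))"

text \<open>Position p_i of the walk: p_i = e_{j_1} + ... + e_{j_i}, a point of Z^k (coordinates c < k).\<close>
definition walk_pos :: "nat list \<Rightarrow> nat \<Rightarrow> (nat \<Rightarrow> int)" where
  "walk_pos js i = (\<lambda>c. int (length (filter (\<lambda>j. j = c) (take i js))))"

definition visible :: "nat \<Rightarrow> (nat \<Rightarrow> int) \<Rightarrow> bool" where
  "visible k p \<longleftrightarrow> Gcd (p ` {..<k}) = 1"

definition X_ind :: "nat \<Rightarrow> nat list \<Rightarrow> nat \<Rightarrow> real" where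
  "X_ind k js i = (if visible k (walk_pos js i) then 1 else 0)"

definition R_bar :: "nat \<Rightarrow> nat \<Rightarrow> nat list \<Rightarrow> real" where
  "R_bar k n js = (1 / real n) * (\<Sum>i=1..n. X_ind k js i * X_ind k js (Suc i))"

end

theory Submission
  imports Defs "HOL-Library.Function_Algebras"
begin

text \<open>
  Write \<open>Y\<^sub>s = X\<^sub>s X\<^sub>s\<^sub>+\<^sub>1\<close>, so that \<open>Var R\<close> is \<open>n\<^sup>-\<^sup>2\<close> times the sum of all covariances
  \<open>Cov(Y\<^sub>s, Y\<^sub>s\<^sub>')\<close>. For \<open>s < s'\<close>, condition on the first \<open>s + 1\<close> steps: \<open>Y\<^sub>s\<close> becomes
  constant and the mean of \<open>Y\<^sub>s\<^sub>'\<close> becomes a function of the position \<open>x = p\<^sub>s\<^sub>+\<^sub>1\<close>, so the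
  covariance is bounded by the oscillation of that function on the hyperplane \<open>\<Sum> x = s + 1\<close>.
  By inclusion-exclusion over the primes dividing \<open>s'\<close> and \<open>s' + 1\<close>, the probability that
  \<open>p\<^sub>s\<^sub>'\<close> and \<open>p\<^sub>s\<^sub>'\<^sub>+\<^sub>1\<close> are both visible is a signed sum of \<open>2\<^bsup>\<omega>(s')\<^esup> 2\<^bsup>\<omega>(s'+1)\<^esup>\<close>
  probabilities of coordinatewise congruences modulo coprime \<open>d\<close> and \<open>e\<close>. Let \<open>\<beta> > 0\<close> bound all
  weights from below. Splitting every step into a \<open>\<beta>\<close>-coin that, on heads, moves along \<open>e\<^sub>0\<close> or
  \<open>e\<^sub>l\<close> with equal odds shows that \<open>m = s' - s - 1\<close> steps of the walk contain a \<open>Bin(M, 1/2)\<close>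
  multiple of \<open>e\<^sub>l - e\<^sub>0\<close> with \<open>M \<sim> Bin(m, \<beta>)\<close>; as a
  symmetric binomial gives two residue classes masses differing by at most
  \<open>C(M, M/2)/2\<^sup>M \<le> 1/\<surd>(M+1)\<close>, moving \<open>x\<close> by \<open>e\<^sub>l - e\<^sub>0\<close> changes each congruence probability by
  at most \<open>1/\<surd>(\<beta>(s' - s))\<close>, and any two points of the hyperplane differ by \<open>k - 1\<close> such
  moves. Finally \<open>2\<^bsup>\<omega>(j)\<^esup> = O(j\<^bsup>\<epsilon>/2\<^esup>)\<close> and \<open>\<Sum>\<^sub>s\<^sub>' |s - s'|\<^sup>-\<^sup>1\<^sup>/\<^sup>2 = O(\<surd>n)\<close>.
\<close>

section \<open>Expectations over finitely supported distributions\<close>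

lemma expectation_cong_pmf:
  fixes f g :: "'a \<Rightarrow> real"
  assumes "\<And>x. x \<in> set_pmf p \<Longrightarrow> f x = g x"
  shows "measure_pmf.expectation p f = measure_pmf.expectation p g"
  using assms by (intro integral_cong_AE) (auto simp: AE_measure_pmf_iff)

lemma expectation_mono_pmf:
  fixes f g :: "'a \<Rightarrow> real"
  assumes "finite (set_pmf p)" "\<And>x. x \<in> set_pmf p \<Longrightarrow> f x \<le> g x"
  shows "measure_pmf.expectation p f \<le> measure_pmf.expectation p g"
  using assms by (intro integral_mono_AE) (auto intro: integrable_measure_pmf_finite simp: AE_measure_pmf_iff)

lemma expectation_bind_pmf:
  fixes h :: "'b \<Rightarrow> real"
  assumes "finite (set_pmf p)" "\<And>x. x \<in> set_pmf p \<Longrightarrow> finite (set_pmf (f x))"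
  shows "measure_pmf.expectation (bind_pmf p f) h =
         measure_pmf.expectation p (\<lambda>x. measure_pmf.expectation (f x) h)"
  using assms
  by (subst pmf_expectation_bind[of "set_pmf p"])
     (auto simp: integral_measure_pmf[of "set_pmf p"] mult.commute)

lemma covariance_le_oscillation:
  fixes f g :: "'a \<Rightarrow> real"
  assumes fin: "finite (set_pmf p)"
    and f01: "\<And>x. x \<in> set_pmf p \<Longrightarrow> 0 \<le> f x \<and> f x \<le> 1"
    and osc: "\<And>x y. x \<in> set_pmf p \<Longrightarrow> y \<in> set_pmf p \<Longrightarrow> \<bar>g x - g y\<bar> \<le> B"
  shows "\<bar>measure_pmf.expectation p (\<lambda>x. f x * g x)
          - measure_pmf.expectation p f * measure_pmf.expectation p g\<bar> \<le> B"
proof -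
  let ?E = "measure_pmf.expectation p"
  have int: "integrable (measure_pmf p) h" for h :: "'a \<Rightarrow> real"
    by (rule integrable_measure_pmf_finite[OF fin])
  have dev: "\<bar>g x - ?E g\<bar> \<le> B" if x: "x \<in> set_pmf p" for x
  proof -
    have "g x - ?E g = ?E (\<lambda>y. g x - g y)"
      by (simp add: Bochner_Integration.integral_diff[OF int int] measure_pmf.prob_space)
    also have "\<bar>\<dots>\<bar> \<le> ?E (\<lambda>y. \<bar>g x - g y\<bar>)"
      by (rule integral_abs_bound)
    also have "\<dots> \<le> ?E (\<lambda>y. B)"
      using fin osc[OF x] by (intro expectation_mono_pmf) auto
    finally show ?thesis
      by (simp add: measure_pmf.prob_space)
  qed
  have "?E (\<lambda>x. f x * g x) - ?E f * ?E g = ?E (\<lambda>x. f x * (g x - ?E g))"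
    by (simp add: right_diff_distrib Bochner_Integration.integral_diff[OF int int])
  also have "\<bar>\<dots>\<bar> \<le> ?E (\<lambda>x. \<bar>f x\<bar> * \<bar>g x - ?E g\<bar>)"
    unfolding abs_mult[symmetric] by (rule integral_abs_bound)
  also have "\<dots> \<le> ?E (\<lambda>x. 1 * B)"
    using f01 dev by (intro expectation_mono_pmf[OF fin] mult_mono) auto
  finally show ?thesis
    by (simp add: measure_pmf.prob_space)
qed

lemma variance_scaled_sum:
  fixes Y :: "'i \<Rightarrow> 'a \<Rightarrow> real"
  assumes fin: "finite (set_pmf p)"
  shows "measure_pmf.variance p (\<lambda>x. c * (\<Sum>s\<in>S. Y s x)) =
    c\<^sup>2 * (\<Sum>s\<in>S. \<Sum>s'\<in>S. measure_pmf.expectation p (\<lambda>x. Y s x * Y s' x) -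
                 measure_pmf.expectation p (Y s) * measure_pmf.expectation p (Y s'))"
proof -
  let ?E = "measure_pmf.expectation p"
  have int: "integrable (measure_pmf p) h" for h :: "'a \<Rightarrow> real"
    by (rule integrable_measure_pmf_finite[OF fin])
  define a where "a s = ?E (Y s)" for s
  have mean: "?E (\<lambda>x. c * (\<Sum>s\<in>S. Y s x)) = c * (\<Sum>s\<in>S. a s)"
    unfolding a_def using int by simp
  have square: "(c * (\<Sum>s\<in>S. Y s x) - c * (\<Sum>s\<in>S. a s))\<^sup>2 =
      c\<^sup>2 * (\<Sum>s\<in>S. \<Sum>s'\<in>S. (Y s x - a s) * (Y s' x - a s'))" for x
  proof -
    have "c * (\<Sum>s\<in>S. Y s x) - c * (\<Sum>s\<in>S. a s) = c * (\<Sum>s\<in>S. Y s x - a s)"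
      by (simp add: sum_subtractf right_diff_distrib)
    then show ?thesis
      by (simp add: power2_eq_square sum_product algebra_simps)
  qed
  have covariance: "?E (\<lambda>x. (Y s x - a s) * (Y s' x - a s')) =
      ?E (\<lambda>x. Y s x * Y s' x) - a s * a s'" for s s'
  proof -
    have "?E (\<lambda>x. (Y s x - a s) * (Y s' x - a s')) =
          ?E (\<lambda>x. Y s x * Y s' x - a s' * Y s x - a s * Y s' x + a s * a s')"
      by (simp add: algebra_simps)
    also have "\<dots> = ?E (\<lambda>x. Y s x * Y s' x) - a s' * a s - a s * a s' + a s * a s'"
      unfolding a_def
      by (simp add: Bochner_Integration.integral_diff[OF int int]
          Bochner_Integration.integral_add[OF int int] measure_pmf.prob_space)
    finally show ?thesis
      by simp
  qed
  have "measure_pmf.variance p (\<lambda>x. c * (\<Sum>s\<in>S. Y s x)) =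
      c\<^sup>2 * (\<Sum>s\<in>S. \<Sum>s'\<in>S. ?E (\<lambda>x. (Y s x - a s) * (Y s' x - a s')))"
    unfolding mean square using int by simp
  also have "\<dots> = c\<^sup>2 * (\<Sum>s\<in>S. \<Sum>s'\<in>S. ?E (\<lambda>x. Y s x * Y s' x) - a s * a s')"
    by (simp only: covariance)
  finally show ?thesis
    unfolding a_def .
qed

lemma pmf_embed_pmf_lessThan:
  fixes f :: "nat \<Rightarrow> real"
  assumes "\<forall>j<k. 0 \<le> f j" "(\<Sum>j<k. f j) = 1"
  shows "pmf (embed_pmf (\<lambda>j. if j < k then f j else 0)) j = (if j < k then f j else 0)"
proof -
  have "(\<integral>\<^sup>+ j. ennreal (if j < k then f j else 0) \<partial>count_space UNIV) =
        (\<integral>\<^sup>+ j. ennreal (f j) \<partial>count_space {..<k})"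
    by (subst nn_integral_count_space_indicator) (auto intro!: nn_integral_cong split: split_indicator)
  also have "\<dots> = (\<Sum>j<k. ennreal (f j))"
    by (subst nn_integral_count_space_finite) auto
  also have "\<dots> = 1"
    using assms by (subst sum_ennreal) auto
  finally show ?thesis
    using assms(1) by (subst pmf_embed_pmf) auto
qed

section \<open>Residue classes under the symmetric binomial distribution\<close>

lemma div_add_one_int:
  fixes x L :: int
  assumes "L > 0"
  shows "(x + 1) div L = x div L + (if L dvd x + 1 then 1 else 0)"
proof (cases "L dvd x + 1")
  case True
  then obtain c where c: "x + 1 = L * c"
    by (rule dvdE)
  have "(x + 1) div L = c"
    using c assms by simp
  moreover have "x div L = c - 1"
  proof -
    have "x = (L - 1) + (c - 1) * L"
      using c by (simp add: algebra_simps)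
    then show ?thesis
      using assms by (simp add: div_pos_pos_trivial)
  qed
  ultimately show ?thesis
    using True by (simp only: if_True)
next
  case False
  have "x mod L \<noteq> L - 1"
  proof
    assume "x mod L = L - 1"
    then have "x + 1 = L * (x div L) + L"
      using mult_div_mod_eq[of L x] by linarith
    then have "x + 1 = L * (x div L + 1)"
      by (simp add: distrib_left)
    with False show False
      by simp
  qed
  then have "x mod L + 1 < L"
    using assms pos_mod_bound[of L x] by linarith
  moreover have "0 \<le> x mod L"
    using assms by simp
  ultimately have "(x + 1) div L = x div L"
    by (subst div_add1_eq) (simp add: div_pos_pos_trivial mod_pos_pos_trivial)
  then show ?thesis
    using False by simp
qed

lemma mod_add_mod_div_in_01:
  fixes u v L :: int
  assumes "L > 0"
  shows "(u mod L + v mod L) div L \<in> {0, 1}"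
proof -
  define x where "x = u mod L + v mod L"
  have "0 \<le> x" "x < 2 * L"
    unfolding x_def using pos_mod_bound[OF assms, of u] pos_mod_bound[OF assms, of v]
      pos_mod_sign[OF assms, of u] pos_mod_sign[OF assms, of v] by linarith+
  moreover have "L * (x div L) \<le> x"
    using mult_div_mod_eq[of L x] pos_mod_sign[OF assms, of x] by linarith
  ultimately have "L * (x div L) < L * 2"
    by linarith
  then have "x div L < 2" "0 \<le> x div L"
    using assms \<open>0 \<le> x\<close> by (simp_all add: pos_imp_zdiv_nonneg_iff)
  then show ?thesis
    unfolding x_def by auto
qed

lemma card_residue_class_interval:
  fixes L r :: int
  assumes "L > 0" "a \<le> b"
  shows "int (card {h\<in>{a..<b}. L dvd int h - r}) = (int b - 1 - r) div L - (int a - 1 - r) div L"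
  using assms(2)
proof (induction b rule: dec_induct)
  case base
  then show ?case
    by simp
next
  case (step b)
  have "{h\<in>{a..<Suc b}. L dvd int h - r} =
        (if L dvd int b - r then insert b {h\<in>{a..<b}. L dvd int h - r} else {h\<in>{a..<b}. L dvd int h - r})"
    using step.hyps by (auto simp: less_Suc_eq)
  moreover have "(int (Suc b) - 1 - r) div L = (int b - 1 - r) div L + (if L dvd int b - r then 1 else 0)"
    using div_add_one_int[OF assms(1), of "int b - 1 - r"] by simp
  ultimately show ?case
    using step.IH by simp
qed

lemma card_residue_class_interval_diff:
  fixes L r r' :: int
  assumes "L > 0"
  shows "\<bar>real (card {h\<in>{a..<b}. L dvd int h - r}) - real (card {h\<in>{a..<b}. L dvd int h - r'})\<bar> \<le> 1"
proof (cases "a \<le> b")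
  case True
  define n where "n = int b - int a"
  \<comment> \<open>The count of a residue class is \<open>n div L\<close> plus a carry that is \<open>0\<close> or \<open>1\<close>.\<close>
  have count: "int (card {h\<in>{a..<b}. L dvd int h - \<rho>}) =
      n div L + ((int a - 1 - \<rho>) mod L + n mod L) div L" for \<rho>
  proof -
    have eq: "int b - 1 - \<rho> = (int a - 1 - \<rho>) + n"
      unfolding n_def by simp
    have "int (card {h\<in>{a..<b}. L dvd int h - \<rho>}) =
        ((int a - 1 - \<rho>) + n) div L - (int a - 1 - \<rho>) div L"
      using card_residue_class_interval[OF assms True, of \<rho>] unfolding eq .
    then show ?thesis
      by (subst (asm) div_add1_eq) simp
  qed
  show ?thesis
    using count[of r] count[of r'] mod_add_mod_div_in_01[OF assms, of "int a - 1 - r" n]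
      mod_add_mod_div_in_01[OF assms, of "int a - 1 - r'" n]
    by auto
qed simp

lemma binomial_level_set_interval:
  "\<exists>a b. {h\<in>{..M}. y \<le> M choose h} = {a..<b}"
proof (cases "{h\<in>{..M}. y \<le> M choose h} = {}")
  case False
  define J where "J = {h\<in>{..M}. y \<le> M choose h}"
  have "finite J" "J \<noteq> {}"
    using False by (auto simp: J_def)
  then have ends: "Min J \<in> J" "Max J \<in> J"
    by auto
  \<comment> \<open>Unimodality: between two points of the level set, one side is monotone.\<close>
  have "h \<in> J" if "Min J \<le> h" "h \<le> Max J" for h
  proof (cases "2 * h \<le> M")
    case True
    then have "M choose Min J \<le> M choose h"
      using that by (intro binomial_mono) auto
    then show ?thesis
      using ends that by (auto simp: J_def)
  next
    case False
    then have "M choose Max J \<le> M choose h"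
      using that ends by (intro binomial_antimono) (auto simp: J_def)
    then show ?thesis
      using ends that by (auto simp: J_def)
  qed
  then have "J = {Min J..<Suc (Max J)}"
    using \<open>finite J\<close> by (auto simp: less_Suc_eq_le)
  then show ?thesis
    unfolding J_def by blast
qed (intro exI[of _ 0], auto)

lemma sum_binomial_layer_cake:
  assumes "S \<subseteq> {..M}"
  shows "(\<Sum>h\<in>S. real (M choose h)) =
         (\<Sum>y\<in>{1..M choose (M div 2)}. real (card {h\<in>S. y \<le> M choose h}))"
proof -
  have "finite S"
    using assms finite_subset by blast
  have "real (M choose h) = (\<Sum>y\<in>{1..M choose (M div 2)}. if y \<le> M choose h then 1 else 0)" for h
  proof -
    have "{1..M choose (M div 2)} \<inter> {y. y \<le> M choose h} = {1..M choose h}"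
      using binomial_maximum[of M h] by auto
    then show ?thesis
      by (simp add: sum.If_cases)
  qed
  then have "(\<Sum>h\<in>S. real (M choose h)) =
      (\<Sum>y\<in>{1..M choose (M div 2)}. \<Sum>h\<in>S. if y \<le> M choose h then 1 else 0)"
    by (simp add: sum.swap[of _ S])
  also have "\<dots> = (\<Sum>y\<in>{1..M choose (M div 2)}. real (card {h\<in>S. y \<le> M choose h}))"
    using \<open>finite S\<close> by (simp add: sum.If_cases Int_def conj_commute)
  finally show ?thesis .
qed

lemma sum_binomial_residue_class_diff:
  fixes L r r' :: int
  assumes "L > 0"
  shows "\<bar>(\<Sum>h\<in>{h\<in>{..M}. L dvd int h - r}. real (M choose h)) -
          (\<Sum>h\<in>{h\<in>{..M}. L dvd int h - r'}. real (M choose h))\<bar> \<le> real (M choose (M div 2))"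
proof -
  define Y where "Y = {1..M choose (M div 2)}"
  define J where "J y = {h\<in>{..M}. y \<le> M choose h}" for y
  define count where "count y \<rho> = real (card {h\<in>J y. L dvd int h - \<rho>})" for y \<rho>
  have layer: "(\<Sum>h\<in>{h\<in>{..M}. L dvd int h - \<rho>}. real (M choose h)) = (\<Sum>y\<in>Y. count y \<rho>)" for \<rho>
  proof -
    have "{h\<in>{h\<in>{..M}. L dvd int h - \<rho>}. y \<le> M choose h} = {h\<in>J y. L dvd int h - \<rho>}" for y
      unfolding J_def by auto
    then show ?thesis
      unfolding Y_def count_def by (subst sum_binomial_layer_cake) auto
  qed
  have "\<bar>count y r - count y r'\<bar> \<le> 1" for y
  proof -
    obtain a b where "J y = {a..<b}"
      unfolding J_def using binomial_level_set_interval by blast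
    then show ?thesis
      unfolding count_def using card_residue_class_interval_diff[OF assms] by simp
  qed
  then have "\<bar>\<Sum>y\<in>Y. count y r - count y r'\<bar> \<le> (\<Sum>y\<in>Y. 1)"
    by (intro order.trans[OF sum_abs] sum_mono)
  then show ?thesis
    unfolding layer by (simp add: sum_subtractf Y_def)
qed

lemma central_binomial_recurrence:
  "(n + 1) * ((2 * n + 2) choose (n + 1)) = 2 * (2 * n + 1) * ((2 * n) choose n)"
proof -
  have sym: "Suc (2 * n) choose n = Suc (2 * n) choose Suc n"
    using binomial_symmetric[of n "Suc (2 * n)"] by (simp add: Suc_diff_le del: binomial_Suc_Suc)
  have "Suc n * (Suc n * (Suc (Suc (2 * n)) choose Suc n)) =
        Suc n * (Suc (Suc (2 * n)) * (Suc (2 * n) choose Suc n))"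
    by (simp only: Suc_times_binomial sym)
  also have "\<dots> = Suc (Suc (2 * n)) * (Suc (2 * n) * ((2 * n) choose n))"
    by (simp only: mult.left_commute[of "Suc n"] Suc_times_binomial)
  also have "\<dots> = Suc n * (2 * (Suc (2 * n) * ((2 * n) choose n)))"
    by simp
  finally have "Suc n * (Suc (Suc (2 * n)) choose Suc n) = 2 * (Suc (2 * n) * ((2 * n) choose n))"
    using nat_mult_eq_cancel1[of "Suc n"] by blast
  then show ?thesis
    by (simp del: binomial_Suc_Suc)
qed

lemma central_binomial_even_sq_le: "((2 * n) choose n)\<^sup>2 * (2 * n + 1) \<le> 16 ^ n"
proof (induction n)
  case (Suc n)
  define c where "c = (2 * n) choose n"
  define c' where "c' = (2 * n + 2) choose (n + 1)"
  have rec: "(n + 1) * c' = 2 * (2 * n + 1) * c"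
    unfolding c_def c'_def by (rule central_binomial_recurrence)
  have "(c'\<^sup>2 * (2 * n + 3)) * (n + 1)\<^sup>2 = ((n + 1) * c')\<^sup>2 * (2 * n + 3)"
    by (simp only: power2_eq_square ac_simps)
  also have "\<dots> = (4 * (2 * n + 1) * (2 * n + 3)) * (c\<^sup>2 * (2 * n + 1))"
    unfolding rec by (simp only: power2_eq_square ac_simps)
  also have "\<dots> \<le> (4 * (2 * n + 1) * (2 * n + 3)) * 16 ^ n"
    using Suc.IH unfolding c_def by (intro mult_left_mono) auto
  also have "\<dots> \<le> (16 * (n + 1)\<^sup>2) * 16 ^ n"
    by (intro mult_right_mono) (auto simp: power2_eq_square algebra_simps)
  finally have "c'\<^sup>2 * (2 * n + 3) \<le> 16 ^ Suc n"
    by (simp add: mult.commute[of "16 ^ n"])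
  moreover have "2 * Suc n = 2 * n + 2" "2 * Suc n + 1 = 2 * n + 3" "Suc n = n + 1"
    by simp_all
  ultimately show ?case
    unfolding c'_def by (simp only:)
qed simp

lemma central_binomial_sq_le: "(M choose (M div 2))\<^sup>2 * (M + 1) \<le> 4 ^ M"
proof (cases "even M")
  case True
  then obtain n where M: "M = 2 * n"
    by blast
  then show ?thesis
    using central_binomial_even_sq_le[of n] by (simp add: power_mult)
next
  case False
  then obtain n where M: "M = 2 * n + 1"
    using oddE by blast
  define c where "c = (2 * n) choose n"
  define d where "d = (2 * n + 1) choose n"
  have rec: "(n + 1) * d = (2 * n + 1) * c"
  proof -
    have "Suc (2 * n) choose n = Suc (2 * n) choose Suc n"
      using binomial_symmetric[of n "Suc (2 * n)"] by (simp add: Suc_diff_le del: binomial_Suc_Suc)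
    then show ?thesis
      using Suc_times_binomial[of n "2 * n"] unfolding c_def d_def by (simp del: binomial_Suc_Suc)
  qed
  have "(d\<^sup>2 * (2 * n + 2)) * (n + 1) = ((n + 1) * d)\<^sup>2 * 2"
    by (simp only: power2_eq_square ac_simps) simp
  also have "\<dots> = (2 * (2 * n + 1)) * (c\<^sup>2 * (2 * n + 1))"
    unfolding rec by (simp only: power2_eq_square ac_simps)
  also have "\<dots> \<le> (2 * (2 * n + 1)) * 16 ^ n"
    using central_binomial_even_sq_le[of n] unfolding c_def by (intro mult_left_mono) auto
  also have "\<dots> \<le> (4 * 16 ^ n) * (n + 1)"
    by simp
  finally have "d\<^sup>2 * (2 * n + 2) \<le> 4 * 16 ^ n"
    by (subst (asm) mult_le_cancel2) simp
  moreover have "M div 2 = n" "(4::nat) ^ M = 4 * 16 ^ n"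
    using M by (simp_all add: power_mult power_add)
  ultimately show ?thesis
    unfolding d_def using M by (simp del: binomial_Suc_Suc)
qed

lemma central_binomial_le_inv_sqrt: "real (M choose (M div 2)) / 2 ^ M \<le> 1 / sqrt (real M + 1)"
proof -
  have "real ((M choose (M div 2))\<^sup>2 * (M + 1)) \<le> real (4 ^ M)"
    using central_binomial_sq_le by (simp only: of_nat_le_iff)
  moreover have "real (4 ^ M) = ((2::real) ^ M)\<^sup>2"
    by (simp add: power2_eq_square power_mult_distrib[symmetric])
  ultimately have "(real (M choose (M div 2)))\<^sup>2 * (real M + 1) \<le> (2 ^ M)\<^sup>2"
    by (simp only: of_nat_mult of_nat_power of_nat_add of_nat_1)
  then have "real (M choose (M div 2)) * sqrt (real M + 1) \<le> 2 ^ M"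
    using power2_le_imp_le[of "real (M choose (M div 2)) * sqrt (real M + 1)" "2 ^ M"]
    by (simp add: power_mult_distrib)
  then show ?thesis
    by (simp add: field_simps)
qed

lemma prob_binomial_half:
  "measure_pmf.prob (binomial_pmf M (1/2)) S = (\<Sum>h\<in>{h\<in>{..M}. h \<in> S}. real (M choose h)) / 2 ^ M"
proof -
  have "measure_pmf.prob (binomial_pmf M (1/2)) S =
        measure_pmf.prob (binomial_pmf M (1/2)) {h\<in>{..M}. h \<in> S}"
    using measure_Int_set_pmf[of "binomial_pmf M (1/2)" S] by (simp add: Int_def conj_commute)
  also have "\<dots> = (\<Sum>h\<in>{h\<in>{..M}. h \<in> S}. pmf (binomial_pmf M (1/2)) h)"
    by (rule measure_measure_pmf_finite) auto
  also have "\<dots> = (\<Sum>h\<in>{h\<in>{..M}. h \<in> S}. real (M choose h) / 2 ^ M)"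
  proof (intro sum.cong refl)
    fix h assume "h \<in> {h\<in>{..M}. h \<in> S}"
    then have "(1/2::real) ^ h * (1 - 1/2) ^ (M - h) = (1/2) ^ M"
      by (simp add: power_add[symmetric])
    then show "pmf (binomial_pmf M (1/2)) h = real (M choose h) / 2 ^ M"
      by (simp add: power_divide mult.assoc)
  qed
  finally show ?thesis
    by (simp add: sum_divide_distrib)
qed

lemma binomial_half_residue_class_prob_diff:
  fixes L r r' :: int
  assumes "L > 0"
  shows "\<bar>measure_pmf.prob (binomial_pmf M (1/2)) {h. L dvd int h - r} -
          measure_pmf.prob (binomial_pmf M (1/2)) {h. L dvd int h - r'}\<bar> \<le> 1 / sqrt (real M + 1)"
proof -
  have "\<bar>measure_pmf.prob (binomial_pmf M (1/2)) {h. L dvd int h - r} -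
          measure_pmf.prob (binomial_pmf M (1/2)) {h. L dvd int h - r'}\<bar>
      = \<bar>(\<Sum>h\<in>{h\<in>{..M}. L dvd int h - r}. real (M choose h)) -
          (\<Sum>h\<in>{h\<in>{..M}. L dvd int h - r'}. real (M choose h))\<bar> / 2 ^ M"
    unfolding prob_binomial_half by (simp add: diff_divide_distrib[symmetric])
  also have "\<dots> \<le> real (M choose (M div 2)) / 2 ^ M"
    by (intro divide_right_mono sum_binomial_residue_class_diff assms) simp
  also have "\<dots> \<le> 1 / sqrt (real M + 1)"
    by (rule central_binomial_le_inv_sqrt)
  finally show ?thesis .
qed

lemma expectation_binomial_inverse:
  assumes "0 < p" "p \<le> 1"
  shows "measure_pmf.expectation (binomial_pmf m p) (\<lambda>M. 1 / (real M + 1)) \<le> 1 / (p * (real m + 1))"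
proof -
  define b where "b j = real (Suc m choose Suc j) * p ^ j * (1 - p) ^ (m - j)" for j
  have absorb: "real (m choose j) * x * (1 / (real j + 1)) = real (Suc m choose Suc j) * x / (real m + 1)"
    for j and x :: real
  proof -
    have "(real j + 1) * real (Suc m choose Suc j) = (real m + 1) * real (m choose j)"
      using Suc_times_binomial[of j m, THEN arg_cong[where f = real]]
      by (simp del: binomial_Suc_Suc add: algebra_simps)
    then show ?thesis
      by (simp add: field_simps del: binomial_Suc_Suc)
  qed
  have "measure_pmf.expectation (binomial_pmf m p) (\<lambda>M. 1 / (real M + 1)) =
        (\<Sum>j\<le>m. real (m choose j) * (p ^ j * (1 - p) ^ (m - j)) * (1 / (real j + 1)))"
    using assms by (subst expectation_binomial_pmf') (auto simp: mult.assoc)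
  also have "\<dots> = (\<Sum>j\<le>m. b j) / (real m + 1)"
    unfolding absorb b_def sum_divide_distrib by (simp only: mult.assoc)
  also have "\<dots> \<le> 1 / (p * (real m + 1))"
  proof -
    have "p * (\<Sum>j\<le>m. b j) = (\<Sum>j\<le>m. real (Suc m choose Suc j) * p ^ Suc j * (1 - p) ^ (Suc m - Suc j))"
      unfolding b_def by (simp add: sum_distrib_left algebra_simps del: binomial_Suc_Suc)
    also have "\<dots> \<le> (\<Sum>i\<le>Suc m. real (Suc m choose i) * p ^ i * (1 - p) ^ (Suc m - i))"
      using assms by (subst sum.atMost_Suc_shift) (simp del: binomial_Suc_Suc)
    also have "\<dots> = 1"
      using binomial_ring[of p "1 - p" "Suc m"] by simp
    finally have "(\<Sum>j\<le>m. b j) \<le> 1 / p"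
      using assms by (simp add: pos_le_divide_eq mult.commute)
    then show ?thesis
      using divide_right_mono[of _ "1 / p" "real m + 1"] by simp
  qed
  finally show ?thesis .
qed

lemma expectation_binomial_inverse_sqrt:
  assumes "0 < p" "p \<le> 1"
  shows "measure_pmf.expectation (binomial_pmf m p) (\<lambda>M. 1 / sqrt (real M + 1)) \<le> 1 / sqrt (p * (real m + 1))"
proof -
  let ?E = "measure_pmf.expectation (binomial_pmf m p)"
  define \<mu> where "\<mu> = 1 / (p * (real m + 1))"
  define s where "s = 1 / sqrt \<mu>"
  have "\<mu> > 0" "s > 0"
    using assms by (simp_all add: \<mu>_def s_def)
  \<comment> \<open>AM-GM gives \<open>1/\<surd>x \<le> (s/x + 1/s)/2\<close>; the choice of \<open>s\<close> makes the bound tight at \<open>x = 1/\<mu>\<close>.\<close>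
  have am_gm: "1 / sqrt x \<le> (s * (1 / x) + 1 / s) / 2" if "x > 0" for x
  proof -
    have "0 \<le> (sqrt s / sqrt x - 1 / sqrt s)\<^sup>2"
      by simp
    also have "\<dots> = s / x - 2 / sqrt x + 1 / s"
      using that \<open>s > 0\<close> by (simp add: power2_eq_square field_simps real_sqrt_mult[symmetric])
    finally show ?thesis
      by simp
  qed
  have int: "integrable (binomial_pmf m p) f" for f :: "nat \<Rightarrow> real"
    using assms by auto
  have "?E (\<lambda>M. 1 / sqrt (real M + 1)) \<le> ?E (\<lambda>M. (s * (1 / (real M + 1)) + 1 / s) / 2)"
    using am_gm by (intro integral_mono int) auto
  also have "\<dots> = (s * ?E (\<lambda>M. 1 / (real M + 1)) + 1 / s) / 2"
    by (simp only: integral_divide_zero Bochner_Integration.integral_add[OF int int]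
        integral_mult_right_zero measure_pmf.prob_space lebesgue_integral_const) simp
  also have "\<dots> \<le> (s * \<mu> + 1 / s) / 2"
    unfolding \<mu>_def using expectation_binomial_inverse[OF assms, of m] \<open>s > 0\<close>
    by (intro divide_right_mono add_right_mono mult_left_mono) auto
  also have "\<dots> = sqrt \<mu>"
    using \<open>\<mu> > 0\<close> by (simp add: s_def field_simps)
  also have "\<dots> = 1 / sqrt (p * (real m + 1))"
    by (simp add: \<mu>_def real_sqrt_divide)
  finally show ?thesis .
qed

lemma binomial_half_translate_prob_diff:
  fixes Z :: "int set" and L t :: int
  assumes "L > 0" and residue_class: "\<And>z z'. z \<in> Z \<Longrightarrow> z' \<in> Z \<longleftrightarrow> L dvd z' - z"
  shows "\<bar>measure_pmf.prob (binomial_pmf M (1/2)) {h. int h + t \<in> Z} -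
          measure_pmf.prob (binomial_pmf M (1/2)) {h. int h \<in> Z}\<bar> \<le> 1 / sqrt (real M + 1)"
proof (cases "Z = {}")
  case False
  then obtain z where "z \<in> Z"
    by blast
  have "{h. int h + t \<in> Z} = {h. L dvd int h - (z - t)}" "{h. int h \<in> Z} = {h. L dvd int h - z}"
    using residue_class[OF \<open>z \<in> Z\<close>] by (auto simp: algebra_simps)
  then show ?thesis
    using binomial_half_residue_class_prob_diff[OF \<open>L > 0\<close>] by simp
qed simp

section \<open>Arithmetic estimates\<close>

lemma prod_primes_dvd_iff:
  fixes D :: "int set"
  assumes "finite D" "\<forall>p\<in>D. prime p"
  shows "\<Prod>D dvd z \<longleftrightarrow> (\<forall>p\<in>D. p dvd z)"
  using assms
proof (induction D rule: finite_induct)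
  case (insert p D)
  have "coprime p (\<Prod>D)"
    using insert by (intro prod_coprime_right primes_coprime) auto
  then show ?case
    using insert by (auto intro: divides_mult dvd_mult_left dvd_mult_right)
qed simp

lemma prod_subset_prime_factors_dvd:
  fixes x :: int
  assumes "D \<subseteq> prime_factors x"
  shows "\<Prod>D dvd x"
proof -
  have "finite D"
    using assms finite_subset by blast
  then show ?thesis
    using assms prod_primes_dvd_iff[of D x] by auto
qed

lemma two_pow_card_le_prod_powr:
  fixes S :: "int set" and \<eta> :: real
  assumes "finite S" "\<forall>p\<in>S. p \<ge> 1" "\<eta> > 0"
  shows "2 ^ card S \<le> 2 ^ nat \<lceil>2 powr (1 / \<eta>)\<rceil> * (\<Prod>p\<in>S. real_of_int p) powr \<eta>"
proof -
  \<comment> \<open>Every \<open>p \<ge> P\<^sub>0\<close> satisfies \<open>2 \<le> p powr \<eta>\<close>; the smaller ones contribute at most \<open>2 ^ P\<^sub>0\<close>.\<close>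
  define P\<^sub>0 :: nat where "P\<^sub>0 = nat \<lceil>2 powr (1 / \<eta>)\<rceil>"
  define S\<^sub>1 where "S\<^sub>1 = {p\<in>S. p < int P\<^sub>0}"
  define S\<^sub>2 where "S\<^sub>2 = {p\<in>S. p \<ge> int P\<^sub>0}"
  have split: "S = S\<^sub>1 \<union> S\<^sub>2" "S\<^sub>1 \<inter> S\<^sub>2 = {}" "finite S\<^sub>1" "finite S\<^sub>2"
    using assms(1) by (auto simp: S\<^sub>1_def S\<^sub>2_def)
  have large: "2 \<le> real_of_int p powr \<eta>" if "p \<ge> int P\<^sub>0" for p
  proof -
    have "2 powr (1 / \<eta>) \<le> real_of_int p"
      using that unfolding P\<^sub>0_def by linarith
    then have "(2 powr (1 / \<eta>)) powr \<eta> \<le> real_of_int p powr \<eta>"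
      using assms(3) by (intro powr_mono2) auto
    then show ?thesis
      using assms(3) by (simp add: powr_powr)
  qed
  have "card S\<^sub>1 \<le> card {0..<int P\<^sub>0}"
    using assms(2) by (intro card_mono) (auto simp: S\<^sub>1_def)
  then have "card S\<^sub>1 \<le> P\<^sub>0"
    by simp
  have "1 \<le> (\<Prod>p\<in>S\<^sub>1. real_of_int p)" "0 \<le> (\<Prod>p\<in>S\<^sub>2. real_of_int p)"
    using assms(2) by (auto simp: S\<^sub>1_def S\<^sub>2_def intro!: prod_ge_1 prod_nonneg)
  then have "(\<Prod>p\<in>S\<^sub>2. real_of_int p) \<le> (\<Prod>p\<in>S. real_of_int p)"
    using mult_right_mono[of 1 "\<Prod>p\<in>S\<^sub>1. real_of_int p"] split by (simp add: prod.union_disjoint)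
  have "(2::real) ^ card S = 2 ^ card S\<^sub>1 * (\<Prod>p\<in>S\<^sub>2. 2)"
    using split by (simp add: card_Un_disjoint power_add)
  also have "\<dots> \<le> 2 ^ P\<^sub>0 * (\<Prod>p\<in>S\<^sub>2. real_of_int p powr \<eta>)"
    using \<open>card S\<^sub>1 \<le> P\<^sub>0\<close> large by (intro mult_mono power_increasing prod_mono prod_nonneg) (auto simp: S\<^sub>2_def)
  also have "\<dots> = 2 ^ P\<^sub>0 * (\<Prod>p\<in>S\<^sub>2. real_of_int p) powr \<eta>"
    by (simp add: prod_powr_distrib)
  also have "\<dots> \<le> 2 ^ P\<^sub>0 * (\<Prod>p\<in>S. real_of_int p) powr \<eta>"
    using \<open>(\<Prod>p\<in>S\<^sub>2. real_of_int p) \<le> (\<Prod>p\<in>S. real_of_int p)\<close> \<open>0 \<le> (\<Prod>p\<in>S\<^sub>2. real_of_int p)\<close> assms(3)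
    by (intro mult_left_mono powr_mono2) auto
  finally show ?thesis
    by (simp add: P\<^sub>0_def)
qed

lemma two_pow_card_prime_factors_le:
  fixes \<eta> :: real
  assumes "\<eta> > 0"
  shows "\<exists>K>0. \<forall>j. j \<ge> 1 \<longrightarrow> 2 ^ card (prime_factors (int j)) \<le> K * real j powr \<eta>"
proof (intro exI[of _ "2 ^ nat \<lceil>2 powr (1 / \<eta>)\<rceil>"] conjI allI impI)
  fix j :: nat
  assume "j \<ge> 1"
  let ?S = "prime_factors (int j)"
  have "\<forall>p\<in>?S. p \<ge> 1"
    using prime_factors_gt_0_int by fastforce
  have "\<Prod>?S \<le> int j"
    using \<open>j \<ge> 1\<close> by (intro zdvd_imp_le prod_subset_prime_factors_dvd) auto
  then have "real_of_int (\<Prod>?S) \<le> real_of_int (int j)"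
    by (simp only: of_int_le_iff)
  then have "(\<Prod>p\<in>?S. real_of_int p) powr \<eta> \<le> real j powr \<eta>"
    using \<open>\<forall>p\<in>?S. p \<ge> 1\<close> assms by (intro powr_mono2 prod_nonneg) auto
  have "2 ^ card ?S \<le> 2 ^ nat \<lceil>2 powr (1 / \<eta>)\<rceil> * (\<Prod>p\<in>?S. real_of_int p) powr \<eta>"
    using \<open>\<forall>p\<in>?S. p \<ge> 1\<close> assms by (intro two_pow_card_le_prod_powr) auto
  also have "\<dots> \<le> 2 ^ nat \<lceil>2 powr (1 / \<eta>)\<rceil> * real j powr \<eta>"
    using \<open>(\<Prod>p\<in>?S. real_of_int p) powr \<eta> \<le> real j powr \<eta>\<close> by (rule mult_left_mono) simp
  finally show "2 ^ card ?S \<le> 2 ^ nat \<lceil>2 powr (1 / \<eta>)\<rceil> * real j powr \<eta>" .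
qed simp

lemma sum_inverse_sqrt_le: "(\<Sum>d\<in>{1..n}. 1 / sqrt (real d)) \<le> 2 * sqrt (real n)"
proof (induction n)
  case (Suc n)
  have "1 / sqrt (real (Suc n)) \<le> 2 * (sqrt (real (Suc n)) - sqrt (real n))"
  proof -
    have "(sqrt (real (Suc n)) - sqrt (real n)) * (sqrt (real (Suc n)) + sqrt (real n)) = 1"
      by (simp add: algebra_simps)
    moreover have "sqrt (real n) \<le> sqrt (real (Suc n))"
      by simp
    ultimately have "1 \<le> (sqrt (real (Suc n)) - sqrt (real n)) * (2 * sqrt (real (Suc n)))"
      by (metis add_le_cancel_left mult_2 mult_left_mono diff_ge_0_iff_ge)
    then show ?thesis
      by (simp add: field_simps)
  qed
  then show ?case
    using Suc.IH by simp
qed simp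

lemma sum_inverse_sqrt_dist_le:
  assumes "s \<in> {1..n}"
  shows "(\<Sum>s'\<in>{1..n} - {s}. 1 / sqrt \<bar>real s - real s'\<bar>) \<le> 4 * sqrt (real n)"
proof -
  let ?g = "\<lambda>d::nat. 1 / sqrt (real d)"
  have split: "{1..n} - {s} = {1..<s} \<union> {s<..n}"
    using assms by auto
  have "(\<Sum>s'\<in>{1..<s}. ?g (s - s')) = (\<Sum>d\<in>(\<lambda>s'. s - s') ` {1..<s}. ?g d)"
    by (subst sum.reindex) (auto simp: inj_on_def)
  also have "\<dots> \<le> (\<Sum>d\<in>{1..n}. ?g d)"
    using assms by (intro sum_mono2) auto
  finally have left: "(\<Sum>s'\<in>{1..<s}. ?g (s - s')) \<le> (\<Sum>d\<in>{1..n}. ?g d)" .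
  have "(\<Sum>s'\<in>{s<..n}. ?g (s' - s)) = (\<Sum>d\<in>(\<lambda>s'. s' - s) ` {s<..n}. ?g d)"
    by (subst sum.reindex) (auto simp: inj_on_def)
  also have "\<dots> \<le> (\<Sum>d\<in>{1..n}. ?g d)"
    using assms by (intro sum_mono2) auto
  finally have right: "(\<Sum>s'\<in>{s<..n}. ?g (s' - s)) \<le> (\<Sum>d\<in>{1..n}. ?g d)" .
  have "(\<Sum>s'\<in>{1..n} - {s}. 1 / sqrt \<bar>real s - real s'\<bar>) =
        (\<Sum>s'\<in>{1..<s}. ?g (s - s')) + (\<Sum>s'\<in>{s<..n}. ?g (s' - s))"
    unfolding split by (subst sum.union_disjoint) (auto simp: of_nat_diff intro!: sum.cong)
  also have "\<dots> \<le> 4 * sqrt (real n)"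
    using left right sum_inverse_sqrt_le[of n] by simp
  finally show ?thesis .
qed

lemma sum_sum_le_inverse_sqrt_dist:
  fixes a :: "nat \<Rightarrow> nat \<Rightarrow> real"
  assumes diag: "\<And>s. s \<in> {1..n} \<Longrightarrow> a s s \<le> 1"
    and off_diag: "\<And>s s'. s \<in> {1..n} \<Longrightarrow> s' \<in> {1..n} \<Longrightarrow> s \<noteq> s' \<Longrightarrow> a s s' \<le> B / sqrt \<bar>real s - real s'\<bar>"
    and "B \<ge> 0"
  shows "(\<Sum>s\<in>{1..n}. \<Sum>s'\<in>{1..n}. a s s') \<le> real n * (1 + 4 * B * sqrt (real n))"
proof -
  have "(\<Sum>s'\<in>{1..n}. a s s') \<le> 1 + 4 * B * sqrt (real n)" if s: "s \<in> {1..n}" for s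
  proof -
    have "(\<Sum>s'\<in>{1..n}. a s s') = a s s + (\<Sum>s'\<in>{1..n} - {s}. a s s')"
      using s by (simp add: sum.remove)
    also have "\<dots> \<le> 1 + (\<Sum>s'\<in>{1..n} - {s}. B * (1 / sqrt \<bar>real s - real s'\<bar>))"
      using s diag off_diag by (intro add_mono sum_mono) auto
    also have "\<dots> = 1 + B * (\<Sum>s'\<in>{1..n} - {s}. 1 / sqrt \<bar>real s - real s'\<bar>)"
      by (simp only: sum_distrib_left)
    also have "\<dots> \<le> 1 + B * (4 * sqrt (real n))"
      using sum_inverse_sqrt_dist_le[OF s] \<open>B \<ge> 0\<close> by (intro add_left_mono mult_left_mono)
    finally show ?thesis
      by simp
  qed
  then have "(\<Sum>s\<in>{1..n}. \<Sum>s'\<in>{1..n}. a s s') \<le> (\<Sum>s\<in>{1..n}. 1 + 4 * B * sqrt (real n))"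
    by (rule sum_mono)
  then show ?thesis
    by simp
qed

lemma inverse_add_powr_sqrt_le:
  fixes x c \<epsilon> :: real
  assumes "x \<ge> 1" "c \<ge> 0" "\<epsilon> > 0"
  shows "(1 + c * (x + 1) powr \<epsilon> * sqrt x) / x \<le> (1 + c * 2 powr \<epsilon>) * x powr (-1/2 + \<epsilon>)"
proof -
  have "x > 0"
    using assms by simp
  have first: "1 / x \<le> x powr (-1/2 + \<epsilon>)"
    using assms powr_mono[of "-1" "-1/2 + \<epsilon>" x] by (simp add: powr_neg_one)
  have "(x + 1) powr \<epsilon> \<le> 2 powr \<epsilon> * x powr \<epsilon>"
    using assms powr_mono2[of \<epsilon> "x + 1" "2 * x"] by (simp add: powr_mult)
  moreover have "sqrt x / x = x powr (-1/2)"
  proof -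
    have "sqrt x / x = x powr (1/2) / x powr 1"
      using \<open>x > 0\<close> by (simp add: powr_half_sqrt)
    also have "\<dots> = x powr (1/2 - 1)"
      by (rule powr_diff[symmetric])
    finally show ?thesis
      by simp
  qed
  ultimately have "c * (x + 1) powr \<epsilon> * (sqrt x / x) \<le> c * (2 powr \<epsilon> * x powr \<epsilon>) * x powr (-1/2)"
    using assms by (simp add: mult_left_mono mult_right_mono)
  also have "\<dots> = c * 2 powr \<epsilon> * x powr (-1/2 + \<epsilon>)"
    by (simp add: powr_add[symmetric])
  finally have second: "c * (x + 1) powr \<epsilon> * (sqrt x / x) \<le> c * 2 powr \<epsilon> * x powr (-1/2 + \<epsilon>)" .
  have "(1 + c * (x + 1) powr \<epsilon> * sqrt x) / x = 1 / x + c * (x + 1) powr \<epsilon> * (sqrt x / x)"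
    by (simp add: add_divide_distrib)
  then show ?thesis
    using first second by (simp add: algebra_simps)
qed

section \<open>Visible points\<close>

definition coords_dvd :: "nat \<Rightarrow> int \<Rightarrow> (nat \<Rightarrow> int) \<Rightarrow> bool" where
  "coords_dvd k d y \<longleftrightarrow> (\<forall>c<k. d dvd y c)"

lemma visible_iff_no_prime_factor_dvd_coords:
  assumes sum: "(\<Sum>c<k. y c) = int j" and "j > 0"
  shows "visible k y \<longleftrightarrow> (\<forall>p\<in>prime_factors (int j). \<not> coords_dvd k p y)"
proof
  assume "visible k y"
  show "\<forall>p\<in>prime_factors (int j). \<not> coords_dvd k p y"
  proof (intro ballI notI)
    fix p assume "p \<in> prime_factors (int j)" "coords_dvd k p y"
    then have "p dvd Gcd (y ` {..<k})"
      by (auto simp: coords_dvd_def intro: Gcd_greatest)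
    with \<open>visible k y\<close> have "is_unit p"
      by (simp add: visible_def)
    with \<open>p \<in> prime_factors (int j)\<close> show False
      using in_prime_factors_imp_prime not_prime_unit by blast
  qed
next
  assume no_factor: "\<forall>p\<in>prime_factors (int j). \<not> coords_dvd k p y"
  define g where "g = Gcd (y ` {..<k})"
  show "visible k y"
  proof (rule ccontr)
    assume "\<not> visible k y"
    then have "\<not> is_unit g"
      by (auto simp: visible_def g_def dest: is_unit_normalize)
    moreover have "g \<noteq> 0"
    proof
      assume "g = 0"
      then have "\<forall>c<k. y c = 0"
        by (auto simp: g_def)
      then show False
        using sum \<open>j > 0\<close> by simp
    qed
    ultimately obtain p where p: "p dvd g" "prime p"
      using prime_divisor_exists by blast
    then have "coords_dvd k p y"
      unfolding coords_dvd_def g_def by (auto intro: dvd_trans Gcd_dvd)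
    moreover from this have "p dvd int j"
      unfolding coords_dvd_def sum[symmetric] by (auto intro: dvd_sum)
    ultimately show False
      using no_factor p \<open>j > 0\<close> by (auto simp: in_prime_factors_iff)
  qed
qed

lemma visible_indicator_eq_sum:
  assumes "(\<Sum>c<k. y c) = int j" "j > 0"
  shows "(of_bool (visible k y) :: real) =
         (\<Sum>D\<in>Pow (prime_factors (int j)). (-1) ^ card D * of_bool (coords_dvd k (\<Prod>D) y))"
proof -
  let ?P = "prime_factors (int j)"
  have "of_bool (visible k y) = (\<Prod>p\<in>?P. - of_bool (coords_dvd k p y) + 1 :: real)"
    using visible_iff_no_prime_factor_dvd_coords[OF assms] by (auto simp: prod_zero_iff)
  also have "\<dots> = (\<Sum>D\<in>Pow ?P. \<Prod>p\<in>D. - of_bool (coords_dvd k p y))"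
    by (subst prod_add) simp_all
  also have "\<dots> = (\<Sum>D\<in>Pow ?P. (-1) ^ card D * of_bool (coords_dvd k (\<Prod>D) y))"
  proof (intro sum.cong refl)
    fix D assume "D \<in> Pow ?P"
    then have "finite D" "\<forall>p\<in>D. prime p"
      by (auto intro: finite_subset)
    then have "coords_dvd k (\<Prod>D) y \<longleftrightarrow> (\<forall>p\<in>D. coords_dvd k p y)"
      unfolding coords_dvd_def using prod_primes_dvd_iff by blast
    with \<open>finite D\<close> show "(\<Prod>p\<in>D. - of_bool (coords_dvd k p y)) =
        (-1) ^ card D * (of_bool (coords_dvd k (\<Prod>D) y) :: real)"
      by (simp add: prod_uminus prod_zero_iff)
  qed
  finally show ?thesis .
qed

section \<open>The walk\<close>

lemma pmf_step_pmf:
  "admissible_type k \<alpha> \<Longrightarrow> pmf (step_pmf k \<alpha>) j = (if j < k then \<alpha> j else 0)"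
  unfolding step_pmf_def admissible_type_def by (rule pmf_embed_pmf_lessThan) (auto simp: less_imp_le)

lemma set_pmf_step_pmf: "admissible_type k \<alpha> \<Longrightarrow> set_pmf (step_pmf k \<alpha>) \<subseteq> {..<k}"
  by (auto simp: set_pmf_eq pmf_step_pmf)

lemma length_steps_pmf: "js \<in> set_pmf (steps_pmf k \<sigma> m) \<Longrightarrow> length js = m"
  by (induction m arbitrary: js) auto

lemma set_pmf_steps_pmf:
  assumes "\<forall>i. admissible_type k (\<sigma> i)" "js \<in> set_pmf (steps_pmf k \<sigma> m)"
  shows "set js \<subseteq> {..<k}"
  using assms(2)
proof (induction m arbitrary: js)
  case (Suc m)
  then show ?case
    using set_pmf_step_pmf assms(1) by fastforce
qed simp

lemma finite_set_pmf_steps_pmf: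
  assumes "\<forall>i. admissible_type k (\<sigma> i)"
  shows "finite (set_pmf (steps_pmf k \<sigma> m))"
proof (rule finite_subset)
  show "set_pmf (steps_pmf k \<sigma> m) \<subseteq> {js. set js \<subseteq> {..<k} \<and> length js = m}"
    using assms set_pmf_steps_pmf length_steps_pmf by blast
qed (rule finite_lists_length_eq, simp)

lemma steps_pmf_add:
  "steps_pmf k \<sigma> (a + b) =
     bind_pmf (steps_pmf k \<sigma> a) (\<lambda>u. map_pmf (\<lambda>v. u @ v) (steps_pmf k (\<lambda>i. \<sigma> (i + a)) b))"
proof (induction b)
  case 0
  then show ?case
    by (simp add: map_pmf_def bind_return_pmf bind_return_pmf')
next
  case (Suc b)
  then show ?case
    by (simp add: map_pmf_def bind_assoc_pmf bind_return_pmf add.commute)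
qed

definition unit_vec :: "nat \<Rightarrow> nat \<Rightarrow> int" where
  "unit_vec j = (\<lambda>c. if c = j then 1 else 0)"

lemma sum_unit_vec: "j < k \<Longrightarrow> (\<Sum>c<k. unit_vec j c) = 1"
  by (simp add: unit_vec_def)

lemma walk_pos_append_le: "i \<le> length u \<Longrightarrow> walk_pos (u @ v) i = walk_pos u i"
  by (simp add: walk_pos_def)

lemma walk_pos_append: "walk_pos (u @ v) (length u + i) = walk_pos u (length u) + walk_pos v i"
  by (simp add: walk_pos_def fun_eq_iff)

lemma walk_pos_singleton: "walk_pos [j] 1 = unit_vec j"
  by (simp add: walk_pos_def fun_eq_iff unit_vec_def)

lemma sum_walk_pos:
  assumes "set u \<subseteq> {..<k}"
  shows "(\<Sum>c<k. walk_pos u (length u) c) = int (length u)"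
  using assms
proof (induction u rule: rev_induct)
  case (snoc j u)
  then show ?case
    using walk_pos_append[of u "[j]" 1] walk_pos_singleton[of j]
    by (simp add: sum.distrib sum_unit_vec)
qed (simp add: walk_pos_def)

definition walk_pmf :: "nat \<Rightarrow> (nat \<Rightarrow> nat \<Rightarrow> real) \<Rightarrow> nat \<Rightarrow> (nat \<Rightarrow> int) pmf" where
  "walk_pmf k \<sigma> m = map_pmf (\<lambda>js. walk_pos js m) (steps_pmf k \<sigma> m)"

lemma walk_pmf_Suc:
  "walk_pmf k \<sigma> (Suc m) = bind_pmf (walk_pmf k \<sigma> m) (\<lambda>p. map_pmf (\<lambda>j. p + unit_vec j) (step_pmf k (\<sigma> (Suc m))))"
proof -
  have "walk_pmf k \<sigma> (Suc m) = bind_pmf (steps_pmf k \<sigma> m)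
          (\<lambda>js. map_pmf (\<lambda>j. walk_pos (js @ [j]) (Suc m)) (step_pmf k (\<sigma> (Suc m))))"
    unfolding walk_pmf_def by (simp add: map_bind_pmf pmf.map_comp o_def)
  also have "\<dots> = bind_pmf (steps_pmf k \<sigma> m) (\<lambda>js. map_pmf (\<lambda>j. walk_pos js m + unit_vec j) (step_pmf k (\<sigma> (Suc m))))"
  proof (intro bind_pmf_cong refl map_pmf_cong)
    fix js j assume "js \<in> set_pmf (steps_pmf k \<sigma> m)"
    then show "walk_pos (js @ [j]) (Suc m) = walk_pos js m + unit_vec j"
      using walk_pos_append[of js "[j]" 1] walk_pos_singleton[of j] length_steps_pmf by simp
  qed
  also have "\<dots> = bind_pmf (walk_pmf k \<sigma> m) (\<lambda>p. map_pmf (\<lambda>j. p + unit_vec j) (step_pmf k (\<sigma> (Suc m))))"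
    unfolding walk_pmf_def by (simp add: bind_map_pmf)
  finally show ?thesis .
qed

lemma finite_set_pmf_walk_pmf:
  "\<forall>i. admissible_type k (\<sigma> i) \<Longrightarrow> finite (set_pmf (walk_pmf k \<sigma> m))"
  unfolding walk_pmf_def using finite_set_pmf_steps_pmf by simp

lemma sum_set_pmf_walk_pmf:
  assumes "\<forall>i. admissible_type k (\<sigma> i)" "T \<in> set_pmf (walk_pmf k \<sigma> m)"
  shows "(\<Sum>c<k. T c) = int m"
proof -
  obtain js where "js \<in> set_pmf (steps_pmf k \<sigma> m)" "T = walk_pos js m"
    using assms(2) unfolding walk_pmf_def by auto
  then show ?thesis
    using sum_walk_pos set_pmf_steps_pmf[OF assms(1)] length_steps_pmf by metis
qed

section \<open>Splitting off fair coin steps\<close>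

definition weights_ge :: "nat \<Rightarrow> real \<Rightarrow> (nat \<Rightarrow> real) \<Rightarrow> bool" where
  "weights_ge k \<beta> \<alpha> \<longleftrightarrow> admissible_type k \<alpha> \<and> 0 < \<beta> \<and> (\<forall>j<k. \<beta> \<le> \<alpha> j)"

lemma exists_weights_ge:
  assumes "finite A" "\<forall>\<alpha>\<in>A. admissible_type k \<alpha>"
  shows "\<exists>\<beta>>0. \<forall>\<alpha>\<in>A. weights_ge k \<beta> \<alpha>"
proof -
  define W where "W = insert 1 ((\<lambda>(\<alpha>, j). \<alpha> j) ` (A \<times> {..<k}))"
  have "finite W" "\<forall>w\<in>W. w > 0"
    using assms by (auto simp: W_def admissible_type_def)
  then have "Min W > 0"
    by (simp add: W_def)
  moreover have "Min W \<le> \<alpha> j" if "\<alpha> \<in> A" "j < k" for \<alpha> j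
    using \<open>finite W\<close> that unfolding W_def by (intro Min_le) (auto intro: rev_image_eqI[of "(\<alpha>, j)"])
  ultimately show ?thesis
    using assms by (auto simp: weights_ge_def)
qed

definition along :: "nat \<Rightarrow> int \<Rightarrow> nat \<Rightarrow> int" where
  "along l z = (\<lambda>c. z * (unit_vec l c - unit_vec 0 c))"

lemma along_add: "along l (a + b) = along l a + along l b"
  by (simp add: along_def fun_eq_iff algebra_simps)

text \<open>
  If every weight is at least \<open>\<beta>\<close>, a type-\<open>\<alpha>\<close> step can be sampled by first tossing a
  \<open>\<beta>\<close>-coin: on heads the step is \<open>e\<^sub>0\<close> or \<open>e\<^sub>l\<close> with probability \<open>1/2\<close> each, on tails
  it follows the residual law below.
\<close>
definition residual_step_pmf :: "nat \<Rightarrow> nat \<Rightarrow> real \<Rightarrow> (nat \<Rightarrow> real) \<Rightarrow> nat pmf" where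
  "residual_step_pmf k l \<beta> \<alpha> =
     embed_pmf (\<lambda>j. if j < k then (\<alpha> j - (if j = 0 \<or> j = l then \<beta> / 2 else 0)) / (1 - \<beta>) else 0)"

lemma weights_ge_less_one:
  assumes "weights_ge k \<beta> \<alpha>" "j < k"
  shows "\<beta> < 1"
proof -
  have "\<beta> \<le> \<alpha> j" "\<alpha> j < 1"
    using assms by (auto simp: weights_ge_def admissible_type_def)
  then show ?thesis
    by linarith
qed

lemma pmf_residual_step_pmf:
  assumes "weights_ge k \<beta> \<alpha>" "0 < l" "l < k"
  shows "pmf (residual_step_pmf k l \<beta> \<alpha>) j =
    (if j < k then (\<alpha> j - (if j = 0 \<or> j = l then \<beta> / 2 else 0)) / (1 - \<beta>) else 0)"
  unfolding residual_step_pmf_def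
proof (rule pmf_embed_pmf_lessThan)
  have "\<beta> < 1"
    using weights_ge_less_one[OF assms(1,3)] .
  moreover have "(if j = 0 \<or> j = l then \<beta> / 2 else 0) \<le> \<alpha> j" if "j < k" for j
    using assms(1) that by (auto simp: weights_ge_def admissible_type_def less_imp_le)
  ultimately show "\<forall>j<k. 0 \<le> (\<alpha> j - (if j = 0 \<or> j = l then \<beta> / 2 else 0)) / (1 - \<beta>)"
    by simp
  have "(\<Sum>j<k. (if j = 0 \<or> j = l then \<beta> / 2 else 0)) = (\<Sum>j\<in>{0, l}. \<beta> / 2)"
    using assms by (intro sum.mono_neutral_cong_right) auto
  then have "(\<Sum>j<k. \<alpha> j - (if j = 0 \<or> j = l then \<beta> / 2 else 0)) = 1 - \<beta>"
    using assms by (simp add: sum_subtractf weights_ge_def admissible_type_def)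
  then show "(\<Sum>j<k. (\<alpha> j - (if j = 0 \<or> j = l then \<beta> / 2 else 0)) / (1 - \<beta>)) = 1"
    using \<open>\<beta> < 1\<close> by (simp add: sum_divide_distrib[symmetric])
qed

lemma set_pmf_residual_step_pmf:
  "weights_ge k \<beta> \<alpha> \<Longrightarrow> 0 < l \<Longrightarrow> l < k \<Longrightarrow> set_pmf (residual_step_pmf k l \<beta> \<alpha>) \<subseteq> {..<k}"
  by (auto simp: set_pmf_eq pmf_residual_step_pmf)

lemma step_pmf_coin_mixture:
  assumes "weights_ge k \<beta> \<alpha>" "0 < l" "l < k"
  shows "step_pmf k \<alpha> = bind_pmf (bernoulli_pmf \<beta>) (\<lambda>c. if c
           then map_pmf (\<lambda>b. if b then l else 0) (bernoulli_pmf (1/2))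
           else residual_step_pmf k l \<beta> \<alpha>)" (is "_ = ?mixture")
proof (rule pmf_eqI)
  fix j
  have \<beta>: "0 < \<beta>" "\<beta> < 1"
    using assms weights_ge_less_one[OF assms(1,3)] by (auto simp: weights_ge_def)
  have coin: "pmf (map_pmf (\<lambda>b. if b then l else 0) (bernoulli_pmf (1/2))) j =
        (if j = l then 1/2 else 0) + (if j = 0 then 1/2 else 0)"
    using assms unfolding map_pmf_def by (simp add: pmf_bind pmf_return indicator_def)
  have "pmf ?mixture j = \<beta> * pmf (map_pmf (\<lambda>b. if b then l else 0) (bernoulli_pmf (1/2))) j +
      (1 - \<beta>) * pmf (residual_step_pmf k l \<beta> \<alpha>) j"
    using \<beta> by (simp add: pmf_bind)
  also have "\<dots> = (if j < k then \<alpha> j else 0)"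
    using \<beta> assms(2,3) by (auto simp: coin pmf_residual_step_pmf[OF assms] field_simps)
  finally show "pmf (step_pmf k \<alpha>) j = pmf ?mixture j"
    using assms(1) by (simp add: pmf_step_pmf weights_ge_def)
qed

text \<open>A coin step is \<open>e\<^sub>0\<close> plus a Bernoulli multiple of \<open>e\<^sub>l - e\<^sub>0\<close>, which is absorbed into the binomial.\<close>
lemma binomial_pmf_coin_step:
  "bind_pmf (binomial_pmf M (1/2)) (\<lambda>h. map_pmf (\<lambda>j. Q + along l (int h) + unit_vec j)
     (map_pmf (\<lambda>b. if b then l else 0) (bernoulli_pmf (1/2)))) =
   map_pmf (\<lambda>h. Q + unit_vec 0 + along l (int h)) (binomial_pmf (Suc M) (1/2))"
proof -
  have coin: "Q + along l (int h) + unit_vec (if b then l else 0) =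
      Q + unit_vec 0 + along l (int ((if b then 1 else 0) + h))" for h b
    by (auto simp: along_def unit_vec_def fun_eq_iff algebra_simps)
  have "bind_pmf (binomial_pmf M (1/2)) (\<lambda>h. map_pmf (\<lambda>j. Q + along l (int h) + unit_vec j)
        (map_pmf (\<lambda>b. if b then l else 0) (bernoulli_pmf (1/2)))) =
      bind_pmf (bernoulli_pmf (1/2)) (\<lambda>b. bind_pmf (binomial_pmf M (1/2)) (\<lambda>h.
        return_pmf (Q + along l (int h) + unit_vec (if b then l else 0))))"
    by (simp add: map_pmf_def bind_assoc_pmf bind_return_pmf bind_commute_pmf[of "binomial_pmf M (1/2)"])
  also have "\<dots> = bind_pmf (bernoulli_pmf (1/2)) (\<lambda>b. bind_pmf (binomial_pmf M (1/2)) (\<lambda>h.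
        return_pmf (Q + unit_vec 0 + along l (int ((if b then 1 else 0) + h)))))"
    by (simp only: coin)
  also have "\<dots> = map_pmf (\<lambda>h. Q + unit_vec 0 + along l (int h)) (binomial_pmf (Suc M) (1/2))"
    by (simp add: binomial_pmf_Suc map_bind_pmf del: of_nat_add)
  finally show ?thesis .
qed

text \<open>
  Joint law of \<open>(Q, M)\<close> after \<open>m\<close> steps, where \<open>M\<close> counts the heads of the \<open>\<beta>\<close>-coins and \<open>Q\<close>
  is the position reached when every coin step is replaced by \<open>e\<^sub>0\<close>.
\<close>
fun skeleton_pmf :: "nat \<Rightarrow> nat \<Rightarrow> real \<Rightarrow> (nat \<Rightarrow> nat \<Rightarrow> real) \<Rightarrow> nat \<Rightarrow> ((nat \<Rightarrow> int) \<times> nat) pmf" where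
  "skeleton_pmf k l \<beta> \<sigma> 0 = return_pmf (0, 0)"
| "skeleton_pmf k l \<beta> \<sigma> (Suc m) = bind_pmf (skeleton_pmf k l \<beta> \<sigma> m) (\<lambda>(Q, M).
     bind_pmf (bernoulli_pmf \<beta>) (\<lambda>c. if c then return_pmf (Q + unit_vec 0, Suc M)
       else map_pmf (\<lambda>j. (Q + unit_vec j, M)) (residual_step_pmf k l \<beta> (\<sigma> (Suc m)))))"

context
  fixes k l :: nat and \<beta> :: real and \<sigma> :: "nat \<Rightarrow> nat \<Rightarrow> real"
  assumes weights: "\<forall>i. weights_ge k \<beta> (\<sigma> i)" and l: "0 < l" "l < k"
begin

lemma coin_prob_bounds: "0 < \<beta>" "\<beta> < 1"
  using weights weights_ge_less_one[OF weights[rule_format] l(2)] by (auto simp: weights_ge_def)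

lemma finite_set_pmf_skeleton_pmf: "finite (set_pmf (skeleton_pmf k l \<beta> \<sigma> m))"
proof (induction m)
  case (Suc m)
  let ?R = "residual_step_pmf k l \<beta> (\<sigma> (Suc m))"
  have "finite (set_pmf ?R)"
    using set_pmf_residual_step_pmf[OF _ l] weights finite_subset by blast
  moreover have "set_pmf (skeleton_pmf k l \<beta> \<sigma> (Suc m)) \<subseteq>
      (\<Union>x\<in>set_pmf (skeleton_pmf k l \<beta> \<sigma> m).
        {(fst x + unit_vec 0, Suc (snd x))} \<union> (\<lambda>j. (fst x + unit_vec j, snd x)) ` set_pmf ?R)"
    by (auto simp: split_beta split: if_splits)
  ultimately show ?case
    using Suc.IH by (auto intro: finite_subset)
qed simp

lemma map_snd_skeleton_pmf: "map_pmf snd (skeleton_pmf k l \<beta> \<sigma> m) = binomial_pmf m \<beta>"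
proof (induction m)
  case 0
  then show ?case
    using coin_prob_bounds by (simp add: binomial_pmf_0)
next
  case (Suc m)
  have "map_pmf snd (skeleton_pmf k l \<beta> \<sigma> (Suc m)) = bind_pmf (map_pmf snd (skeleton_pmf k l \<beta> \<sigma> m))
      (\<lambda>M. bind_pmf (bernoulli_pmf \<beta>) (\<lambda>c. return_pmf ((if c then 1 else 0) + M)))"
    by (auto simp: map_bind_pmf bind_map_pmf split_beta pmf.map_comp o_def intro!: bind_pmf_cong)
  also have "\<dots> = binomial_pmf (Suc m) \<beta>"
    unfolding Suc.IH using coin_prob_bounds by (subst binomial_pmf_Suc) (auto intro: bind_commute_pmf)
  finally show ?case .
qed

lemma binomial_step_pmf_coin_mixture:
  "bind_pmf (binomial_pmf M (1/2)) (\<lambda>h. map_pmf (\<lambda>j. Q + along l (int h) + unit_vec j) (step_pmf k (\<sigma> i))) =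
   bind_pmf (bernoulli_pmf \<beta>) (\<lambda>c. if c
     then map_pmf (\<lambda>h. Q + unit_vec 0 + along l (int h)) (binomial_pmf (Suc M) (1/2))
     else bind_pmf (residual_step_pmf k l \<beta> (\<sigma> i))
       (\<lambda>j. map_pmf (\<lambda>h. Q + unit_vec j + along l (int h)) (binomial_pmf M (1/2))))"
proof -
  have "bind_pmf (binomial_pmf M (1/2)) (\<lambda>h. map_pmf (\<lambda>j. Q + along l (int h) + unit_vec j) (step_pmf k (\<sigma> i))) =
      bind_pmf (bernoulli_pmf \<beta>) (\<lambda>c. bind_pmf (binomial_pmf M (1/2)) (\<lambda>h.
        map_pmf (\<lambda>j. Q + along l (int h) + unit_vec j) (if c
          then map_pmf (\<lambda>b. if b then l else 0) (bernoulli_pmf (1/2))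
          else residual_step_pmf k l \<beta> (\<sigma> i))))"
    unfolding step_pmf_coin_mixture[OF weights[rule_format] l]
    by (simp add: map_bind_pmf bind_commute_pmf[of "binomial_pmf M (1/2)"])
  also have "\<dots> = bind_pmf (bernoulli_pmf \<beta>) (\<lambda>c. if c
     then map_pmf (\<lambda>h. Q + unit_vec 0 + along l (int h)) (binomial_pmf (Suc M) (1/2))
     else bind_pmf (residual_step_pmf k l \<beta> (\<sigma> i))
       (\<lambda>j. map_pmf (\<lambda>h. Q + unit_vec j + along l (int h)) (binomial_pmf M (1/2))))"
  proof (intro bind_pmf_cong refl)
    fix c :: bool
    show "bind_pmf (binomial_pmf M (1/2)) (\<lambda>h. map_pmf (\<lambda>j. Q + along l (int h) + unit_vec j) (if c
          then map_pmf (\<lambda>b. if b then l else 0) (bernoulli_pmf (1/2))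
          else residual_step_pmf k l \<beta> (\<sigma> i))) =
      (if c then map_pmf (\<lambda>h. Q + unit_vec 0 + along l (int h)) (binomial_pmf (Suc M) (1/2))
       else bind_pmf (residual_step_pmf k l \<beta> (\<sigma> i))
         (\<lambda>j. map_pmf (\<lambda>h. Q + unit_vec j + along l (int h)) (binomial_pmf M (1/2))))"
    proof (cases c)
      case True
      then show ?thesis
        by (simp only: if_True binomial_pmf_coin_step)
    next
      case False
      then show ?thesis
        by (simp add: map_pmf_def bind_assoc_pmf bind_return_pmf bind_commute_pmf[of "binomial_pmf M (1/2)"]
            add_ac)
    qed
  qed
  finally show ?thesis .
qed

lemma walk_pmf_eq_skeleton_pmf:
  "walk_pmf k \<sigma> m = bind_pmf (skeleton_pmf k l \<beta> \<sigma> m)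
     (\<lambda>(Q, M). map_pmf (\<lambda>h. Q + along l (int h)) (binomial_pmf M (1/2)))"
proof (induction m)
  case 0
  have "walk_pos [] 0 = 0" "along l 0 = 0"
    by (simp_all add: walk_pos_def along_def fun_eq_iff)
  then show ?case
    by (simp add: walk_pmf_def binomial_pmf_0 bind_return_pmf)
next
  case (Suc m)
  let ?B = "\<lambda>M. binomial_pmf M (1/2)" and ?R = "residual_step_pmf k l \<beta> (\<sigma> (Suc m))"
  have "walk_pmf k \<sigma> (Suc m) = bind_pmf (skeleton_pmf k l \<beta> \<sigma> m) (\<lambda>x. bind_pmf (?B (snd x))
      (\<lambda>h. map_pmf (\<lambda>j. fst x + along l (int h) + unit_vec j) (step_pmf k (\<sigma> (Suc m)))))"
    unfolding walk_pmf_Suc Suc.IH by (simp add: bind_assoc_pmf bind_map_pmf split_beta)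
  also have "\<dots> = bind_pmf (skeleton_pmf k l \<beta> \<sigma> m) (\<lambda>x. bind_pmf (bernoulli_pmf \<beta>) (\<lambda>c. if c
      then map_pmf (\<lambda>h. fst x + unit_vec 0 + along l (int h)) (?B (Suc (snd x)))
      else bind_pmf ?R (\<lambda>j. map_pmf (\<lambda>h. fst x + unit_vec j + along l (int h)) (?B (snd x)))))"
    by (simp only: binomial_step_pmf_coin_mixture)
  also have "\<dots> = bind_pmf (skeleton_pmf k l \<beta> \<sigma> (Suc m))
      (\<lambda>(Q, M). map_pmf (\<lambda>h. Q + along l (int h)) (?B M))"
    by (auto simp: bind_assoc_pmf split_beta bind_return_pmf bind_map_pmf intro!: bind_pmf_cong)
  finally show ?case .
qed

lemma prob_walk_pmf_translate_along_le:
  fixes E :: "(nat \<Rightarrow> int) set" and L t :: int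
  assumes "L > 0" and residue_class: "\<And>y z. y \<in> E \<Longrightarrow> y + along l z \<in> E \<longleftrightarrow> L dvd z"
  shows "\<bar>measure_pmf.prob (walk_pmf k \<sigma> m) {p. p + along l t \<in> E} - measure_pmf.prob (walk_pmf k \<sigma> m) E\<bar>
         \<le> 1 / sqrt (\<beta> * (real m + 1))"
proof -
  let ?S = "skeleton_pmf k l \<beta> \<sigma> m" and ?B = "\<lambda>M. binomial_pmf M (1/2)"
  define Z where "Z Q = {z. Q + along l z \<in> E}" for Q
  define g where "g x = measure_pmf.prob (?B (snd x)) {h. int h + t \<in> Z (fst x)} -
      measure_pmf.prob (?B (snd x)) {h. int h \<in> Z (fst x)}" for x
  have int: "integrable (measure_pmf ?S) f" for f :: "_ \<Rightarrow> real"
    by (rule integrable_measure_pmf_finite[OF finite_set_pmf_skeleton_pmf])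
  have prob: "measure_pmf.prob (walk_pmf k \<sigma> m) S =
      measure_pmf.expectation ?S (\<lambda>x. measure_pmf.prob (?B (snd x)) {h. fst x + along l (int h) \<in> S})" for S
    unfolding walk_pmf_eq_skeleton_pmf using finite_set_pmf_skeleton_pmf
    by (subst expectation_bind_pmf[where h = "indicator S", simplified]) (auto simp: split_beta vimage_def)
  have "measure_pmf.prob (walk_pmf k \<sigma> m) {p. p + along l t \<in> E} - measure_pmf.prob (walk_pmf k \<sigma> m) E =
      measure_pmf.expectation ?S g"
    unfolding prob g_def Z_def using int by (simp add: along_add add_ac)
  also have "\<bar>\<dots>\<bar> \<le> measure_pmf.expectation ?S (\<lambda>x. 1 / sqrt (real (snd x) + 1))"
  proof (rule order.trans[OF integral_abs_bound expectation_mono_pmf[OF finite_set_pmf_skeleton_pmf]])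
    fix x :: "(nat \<Rightarrow> int) \<times> nat"
    have "z \<in> Z (fst x) \<Longrightarrow> z' \<in> Z (fst x) \<longleftrightarrow> L dvd z' - z" for z z'
      using residue_class[of "fst x + along l z" "z' - z"] by (simp add: Z_def add.assoc flip: along_add)
    then show "\<bar>g x\<bar> \<le> 1 / sqrt (real (snd x) + 1)"
      unfolding g_def by (rule binomial_half_translate_prob_diff[OF \<open>L > 0\<close>])
  qed
  also have "\<dots> = measure_pmf.expectation (binomial_pmf m \<beta>) (\<lambda>M. 1 / sqrt (real M + 1))"
    by (simp flip: map_snd_skeleton_pmf)
  also have "\<dots> \<le> 1 / sqrt (\<beta> * (real m + 1))"
    using coin_prob_bounds by (intro expectation_binomial_inverse_sqrt) auto
  finally show ?thesis .
qed
end

section \<open>Translating congruence events\<close>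

definition joint_dvd_set :: "nat \<Rightarrow> int \<Rightarrow> int \<Rightarrow> (nat \<Rightarrow> int) \<Rightarrow> (nat \<Rightarrow> int) \<Rightarrow> (nat \<Rightarrow> int) set" where
  "joint_dvd_set k d e a b = {y. coords_dvd k d (a + y) \<and> coords_dvd k e (b + y)}"

lemma joint_dvd_set_add_along_iff:
  assumes "coprime d e" "0 < l" "l < k" "y \<in> joint_dvd_set k d e a b"
  shows "y + along l z \<in> joint_dvd_set k d e a b \<longleftrightarrow> d * e dvd z"
proof
  assume "y + along l z \<in> joint_dvd_set k d e a b"
  then have "d dvd (a l + y l) + z" "e dvd (b l + y l) + z"
    using assms(2,3) by (auto simp: joint_dvd_set_def coords_dvd_def along_def unit_vec_def add.assoc)
  moreover have "d dvd a l + y l" "e dvd b l + y l"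
    using assms(3,4) by (auto simp: joint_dvd_set_def coords_dvd_def)
  ultimately show "d * e dvd z"
    using assms(1) by (meson dvd_add_right_iff divides_mult)
next
  assume "d * e dvd z"
  then have "d dvd along l z c" "e dvd along l z c" for c
    by (auto simp: along_def intro: dvd_mult2 dvd_mult_left)
  then show "y + along l z \<in> joint_dvd_set k d e a b"
    using assms(4) by (auto simp: joint_dvd_set_def coords_dvd_def add.assoc[symmetric])
qed

lemma sum_along_eq:
  assumes "(\<Sum>c<k. \<delta> c) = 0" "c < k"
  shows "(\<Sum>l\<in>{1..<k}. along l (\<delta> l) c) = \<delta> c"
proof (cases "c = 0")
  case True
  have "{..<k} = insert 0 {1..<k}"
    using assms(2) True by auto
  then have "(\<Sum>l\<in>{1..<k}. \<delta> l) = - \<delta> 0"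
    using assms(1) by simp
  then show ?thesis
    using True by (simp add: along_def unit_vec_def sum_negf)
next
  case False
  then have "(\<Sum>l\<in>{1..<k}. along l (\<delta> l) c) = (\<Sum>l\<in>{1..<k}. if l = c then \<delta> l else 0)"
    by (intro sum.cong) (auto simp: along_def unit_vec_def)
  then show ?thesis
    using False assms(2) by simp
qed

context
  fixes k :: nat and \<beta> :: real and \<sigma> :: "nat \<Rightarrow> nat \<Rightarrow> real"
  assumes weights: "\<forall>i. weights_ge k \<beta> (\<sigma> i)"
begin

lemma prob_walk_pmf_translate_joint_dvd_set_le:
  fixes d e :: int
  assumes "d > 0" "e > 0" "coprime d e" "\<Lambda> \<subseteq> {1..<k}"
  shows "\<bar>measure_pmf.prob (walk_pmf k \<sigma> m)
            (joint_dvd_set k d e (\<lambda>c. a c + (\<Sum>l\<in>\<Lambda>. along l (z l) c)) (\<lambda>c. b c + (\<Sum>l\<in>\<Lambda>. along l (z l) c)))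
          - measure_pmf.prob (walk_pmf k \<sigma> m) (joint_dvd_set k d e a b)\<bar>
         \<le> real (card \<Lambda>) / sqrt (\<beta> * (real m + 1))"
proof -
  have "finite \<Lambda>"
    using assms(4) finite_subset by blast
  then show ?thesis
    using assms(4)
  proof (induction \<Lambda> rule: finite_induct)
    case (insert l \<Lambda>)
    let ?P = "\<lambda>a b. measure_pmf.prob (walk_pmf k \<sigma> m) (joint_dvd_set k d e a b)"
    define a' where "a' = (\<lambda>c. a c + (\<Sum>l\<in>\<Lambda>. along l (z l) c))"
    define b' where "b' = (\<lambda>c. b c + (\<Sum>l\<in>\<Lambda>. along l (z l) c))"
    have l: "0 < l" "l < k"
      using insert.prems by auto
    have "joint_dvd_set k d e (\<lambda>c. a c + (\<Sum>l\<in>insert l \<Lambda>. along l (z l) c))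
            (\<lambda>c. b c + (\<Sum>l\<in>insert l \<Lambda>. along l (z l) c)) =
          {p. p + along l (z l) \<in> joint_dvd_set k d e a' b'}"
      using insert.hyps by (auto simp: joint_dvd_set_def a'_def b'_def coords_dvd_def add_ac)
    moreover have "\<bar>measure_pmf.prob (walk_pmf k \<sigma> m) {p. p + along l (z l) \<in> joint_dvd_set k d e a' b'} - ?P a' b'\<bar>
        \<le> 1 / sqrt (\<beta> * (real m + 1))"
      using assms(1-3) l joint_dvd_set_add_along_iff
      by (intro prob_walk_pmf_translate_along_le[OF weights l, where L = "d * e"]) auto
    moreover have "\<bar>?P a' b' - ?P a b\<bar> \<le> real (card \<Lambda>) / sqrt (\<beta> * (real m + 1))"
      using insert unfolding a'_def b'_def by simp
    ultimately show ?case
      using insert.hyps by (simp add: add_divide_distrib)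
  qed simp
qed

lemma prob_walk_pmf_translate_joint_dvd_set_sum_zero_le:
  fixes d e :: int
  assumes "d > 0" "e > 0" "coprime d e" "(\<Sum>c<k. \<delta> c) = 0"
  shows "\<bar>measure_pmf.prob (walk_pmf k \<sigma> m) (joint_dvd_set k d e (a + \<delta>) (b + \<delta>))
          - measure_pmf.prob (walk_pmf k \<sigma> m) (joint_dvd_set k d e a b)\<bar>
         \<le> real (k - 1) / sqrt (\<beta> * (real m + 1))"
proof -
  have "joint_dvd_set k d e (a + \<delta>) (b + \<delta>) =
      joint_dvd_set k d e (\<lambda>c. a c + (\<Sum>l\<in>{1..<k}. along l (\<delta> l) c)) (\<lambda>c. b c + (\<Sum>l\<in>{1..<k}. along l (\<delta> l) c))"
    using sum_along_eq[OF assms(4)] by (auto simp: joint_dvd_set_def coords_dvd_def)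
  then show ?thesis
    using prob_walk_pmf_translate_joint_dvd_set_le[OF assms(1-3), of "{1..<k}" m a \<delta> b] by simp
qed

lemma prob_visible_pair_eq_sum:
  assumes "(\<Sum>c<k. x c) = int s" "s + m > 0" "w < k"
  shows "measure_pmf.prob (walk_pmf k \<sigma> m) {T. visible k (x + T) \<and> visible k (x + T + unit_vec w)} =
    (\<Sum>D\<in>Pow (prime_factors (int (s + m))). \<Sum>U\<in>Pow (prime_factors (int (Suc (s + m)))).
      (-1) ^ (card D + card U) * measure_pmf.prob (walk_pmf k \<sigma> m) (joint_dvd_set k (\<Prod>D) (\<Prod>U) x (x + unit_vec w)))"
proof -
  let ?W = "walk_pmf k \<sigma> m"
  let ?P\<^sub>1 = "prime_factors (int (s + m))" and ?P\<^sub>2 = "prime_factors (int (Suc (s + m)))"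
  have adm: "\<forall>i. admissible_type k (\<sigma> i)"
    using weights by (simp add: weights_ge_def)
  have int: "integrable (measure_pmf ?W) f" for f :: "_ \<Rightarrow> real"
    by (rule integrable_measure_pmf_finite[OF finite_set_pmf_walk_pmf[OF adm]])
  have pointwise: "indicator {T. visible k (x + T) \<and> visible k (x + T + unit_vec w)} T =
      (\<Sum>D\<in>Pow ?P\<^sub>1. \<Sum>U\<in>Pow ?P\<^sub>2.
        (-1) ^ (card D + card U) * indicator (joint_dvd_set k (\<Prod>D) (\<Prod>U) x (x + unit_vec w)) T :: real)"
    if "T \<in> set_pmf ?W" for T
  proof -
    have sum_T: "(\<Sum>c<k. T c) = int m"
      using sum_set_pmf_walk_pmf[OF adm that] .
    have sum\<^sub>1: "(\<Sum>c<k. (x + T) c) = int (s + m)"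
      and sum\<^sub>2: "(\<Sum>c<k. (x + T + unit_vec w) c) = int (Suc (s + m))"
      using assms sum_T sum_unit_vec[OF assms(3)] by (simp_all add: sum.distrib)
    have pointwise: "indicator {T. visible k (x + T) \<and> visible k (x + T + unit_vec w)} T =
        of_bool (visible k (x + T)) * (of_bool (visible k (x + T + unit_vec w)) :: real)"
      by (simp add: indicator_def)
    also have "\<dots> = (\<Sum>D\<in>Pow ?P\<^sub>1. (-1) ^ card D * of_bool (coords_dvd k (\<Prod>D) (x + T))) *
        (\<Sum>U\<in>Pow ?P\<^sub>2. (-1) ^ card U * of_bool (coords_dvd k (\<Prod>U) (x + T + unit_vec w)))"
      using assms(2) by (simp only: visible_indicator_eq_sum[OF sum\<^sub>1] visible_indicator_eq_sum[OF sum\<^sub>2])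
    also have "\<dots> = (\<Sum>D\<in>Pow ?P\<^sub>1. \<Sum>U\<in>Pow ?P\<^sub>2.
        (-1) ^ (card D + card U) * indicator (joint_dvd_set k (\<Prod>D) (\<Prod>U) x (x + unit_vec w)) T)"
      unfolding sum_product
      by (intro sum.cong refl) (simp add: power_add indicator_def joint_dvd_set_def add_ac)
    finally show ?thesis .
  qed
  have "measure_pmf.prob ?W {T. visible k (x + T) \<and> visible k (x + T + unit_vec w)} =
      measure_pmf.expectation ?W (indicator {T. visible k (x + T) \<and> visible k (x + T + unit_vec w)})"
    by simp
  also have "\<dots> = measure_pmf.expectation ?W (\<lambda>T. \<Sum>D\<in>Pow ?P\<^sub>1. \<Sum>U\<in>Pow ?P\<^sub>2.
        (-1) ^ (card D + card U) * indicator (joint_dvd_set k (\<Prod>D) (\<Prod>U) x (x + unit_vec w)) T)"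
    by (rule expectation_cong_pmf) (rule pointwise)
  also have "\<dots> = (\<Sum>D\<in>Pow ?P\<^sub>1. \<Sum>U\<in>Pow ?P\<^sub>2.
      (-1) ^ (card D + card U) * measure_pmf.prob ?W (joint_dvd_set k (\<Prod>D) (\<Prod>U) x (x + unit_vec w)))"
    by (simp only: Bochner_Integration.integral_sum int integral_mult_right_zero integral_indicator)
      simp
  finally show ?thesis .
qed

lemma prob_visible_pair_translate_le:
  assumes "(\<Sum>c<k. x c) = int s" "(\<Sum>c<k. x' c) = int s" "s + m > 0" "w < k"
  shows "\<bar>measure_pmf.prob (walk_pmf k \<sigma> m) {T. visible k (x' + T) \<and> visible k (x' + T + unit_vec w)} -
          measure_pmf.prob (walk_pmf k \<sigma> m) {T. visible k (x + T) \<and> visible k (x + T + unit_vec w)}\<bar>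
    \<le> 2 ^ card (prime_factors (int (s + m))) * 2 ^ card (prime_factors (int (Suc (s + m)))) *
       (real (k - 1) / sqrt (\<beta> * (real m + 1)))"
proof -
  let ?P\<^sub>1 = "prime_factors (int (s + m))" and ?P\<^sub>2 = "prime_factors (int (Suc (s + m)))"
  let ?Q = "\<lambda>D U y. measure_pmf.prob (walk_pmf k \<sigma> m) (joint_dvd_set k (\<Prod>D) (\<Prod>U) y (y + unit_vec w))"
  let ?B = "real (k - 1) / sqrt (\<beta> * (real m + 1))"
  have "\<bar>?Q D U x' - ?Q D U x\<bar> \<le> ?B" if "D \<in> Pow ?P\<^sub>1" "U \<in> Pow ?P\<^sub>2" for D U
  proof -
    have "\<Prod>D dvd int (s + m)" "\<Prod>U dvd int (s + m) + 1"
      using that prod_subset_prime_factors_dvd by (auto simp: add_ac)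
    then have "coprime (\<Prod>D) (\<Prod>U)"
      by (rule coprime_divisors) simp
    moreover have "p > 0" if "p \<in> D \<union> U" for p
      using that \<open>D \<in> Pow ?P\<^sub>1\<close> \<open>U \<in> Pow ?P\<^sub>2\<close> by (auto intro: prime_factors_gt_0_int)
    then have "\<Prod>D > 0" "\<Prod>U > 0"
      by (auto intro!: prod_pos)
    moreover have "x' = x + (x' - x)" "x' + unit_vec w = x + unit_vec w + (x' - x)"
      by (simp_all add: algebra_simps)
    moreover have "(\<Sum>c<k. (x' - x) c) = 0"
      using assms by (simp add: sum_subtractf)
    ultimately show ?thesis
      using prob_walk_pmf_translate_joint_dvd_set_sum_zero_le by metis
  qed
  then have "\<bar>\<Sum>D\<in>Pow ?P\<^sub>1. \<Sum>U\<in>Pow ?P\<^sub>2. (-1) ^ (card D + card U) * (?Q D U x' - ?Q D U x)\<bar>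
      \<le> (\<Sum>D\<in>Pow ?P\<^sub>1. \<Sum>U\<in>Pow ?P\<^sub>2. ?B)"
    by (intro order.trans[OF sum_abs] sum_mono order.trans[OF sum_abs])
      (simp add: abs_mult power_abs)
  then show ?thesis
    using assms by (simp add: prob_visible_pair_eq_sum card_Pow sum_subtractf right_diff_distrib mult.assoc)
qed

end

section \<open>Covariances of consecutive visibility indicators\<close>

lemma map_pmf_take_steps_pmf:
  assumes "N \<le> n"
  shows "map_pmf (take N) (steps_pmf k \<sigma> n) = steps_pmf k \<sigma> N"
proof -
  have "map_pmf (take N) (steps_pmf k \<sigma> (N + (n - N))) = steps_pmf k \<sigma> N"
    unfolding steps_pmf_add
    by (auto simp: map_bind_pmf pmf.map_comp o_def length_steps_pmf bind_return_pmf'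
        intro: trans[OF bind_pmf_cong[OF refl] bind_return_pmf'])
  then show ?thesis
    using assms by simp
qed

lemma walk_pos_take: "i \<le> N \<Longrightarrow> walk_pos (take N js) i = walk_pos js i"
  by (simp add: walk_pos_def min_def)

definition pair_ind :: "nat \<Rightarrow> nat \<Rightarrow> nat list \<Rightarrow> real" where
  "pair_ind k s js = X_ind k js s * X_ind k js (Suc s)"

lemma pair_ind_take: "s < N \<Longrightarrow> pair_ind k s (take N js) = pair_ind k s js"
  by (simp add: pair_ind_def X_ind_def walk_pos_take)

lemma pair_ind_bounds: "0 \<le> pair_ind k s js \<and> pair_ind k s js \<le> 1"
  by (simp add: pair_ind_def X_ind_def)

lemma expectation_pair_ind_prefix:
  assumes "s < N" "N \<le> n"
  shows "measure_pmf.expectation (steps_pmf k \<sigma> n) (\<lambda>js. f (take N js) * pair_ind k s js) =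
         measure_pmf.expectation (steps_pmf k \<sigma> N) (\<lambda>js. f js * pair_ind k s js)"
  using assms pair_ind_take[of s N]
  by (simp flip: map_pmf_take_steps_pmf[OF assms(2)])

definition visible_pair_prob :: "nat \<Rightarrow> (nat \<Rightarrow> nat \<Rightarrow> real) \<Rightarrow> nat \<Rightarrow> (nat \<Rightarrow> int) \<Rightarrow> real" where
  "visible_pair_prob k \<sigma> m x = measure_pmf.prob (steps_pmf k \<sigma> (Suc m))
     {js. visible k (x + walk_pos js m) \<and> visible k (x + walk_pos js (Suc m))}"

lemma visible_pair_prob_eq:
  assumes "\<forall>i. admissible_type k (\<sigma> i)"
  shows "visible_pair_prob k \<sigma> m x = measure_pmf.expectation (step_pmf k (\<sigma> (Suc m)))
    (\<lambda>j. measure_pmf.prob (walk_pmf k \<sigma> m) {T. visible k (x + T) \<and> visible k (x + T + unit_vec j)})"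
proof -
  let ?S = "step_pmf k (\<sigma> (Suc m))"
  have "finite (set_pmf ?S)"
    using assms by (intro finite_subset[OF set_pmf_step_pmf]) auto
  have last: "walk_pos (js @ [j]) (Suc m) = walk_pos js m + unit_vec j" "walk_pos (js @ [j]) m = walk_pos js m"
    if "js \<in> set_pmf (steps_pmf k \<sigma> m)" for js j
    using walk_pos_append[of js "[j]" 1] walk_pos_singleton[of j] walk_pos_append_le[of m js "[j]"]
      length_steps_pmf[OF that] by simp_all
  have "steps_pmf k \<sigma> (Suc m) = bind_pmf ?S (\<lambda>j. map_pmf (\<lambda>js. js @ [j]) (steps_pmf k \<sigma> m))"
    by (simp add: map_pmf_def bind_commute_pmf[of "steps_pmf k \<sigma> m"])
  then have "visible_pair_prob k \<sigma> m x = measure_pmf.expectation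
      (bind_pmf ?S (\<lambda>j. map_pmf (\<lambda>js. js @ [j]) (steps_pmf k \<sigma> m)))
      (indicator {js. visible k (x + walk_pos js m) \<and> visible k (x + walk_pos js (Suc m))})"
    by (simp add: visible_pair_prob_def)
  also have "\<dots> = measure_pmf.expectation ?S (\<lambda>j. measure_pmf.expectation (map_pmf (\<lambda>js. js @ [j]) (steps_pmf k \<sigma> m))
      (indicator {js. visible k (x + walk_pos js m) \<and> visible k (x + walk_pos js (Suc m))}))"
    using \<open>finite (set_pmf ?S)\<close> finite_set_pmf_steps_pmf[OF assms] by (intro expectation_bind_pmf) auto
  also have "\<dots> = measure_pmf.expectation ?S (\<lambda>j. measure_pmf.expectation (steps_pmf k \<sigma> m) (\<lambda>js.
      indicator {T. visible k (x + T) \<and> visible k (x + T + unit_vec j)} (walk_pos js m)))"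
    unfolding integral_map_pmf
    by (intro expectation_cong_pmf) (simp add: last indicator_def add.assoc)
  also have "\<dots> = measure_pmf.expectation ?S
      (\<lambda>j. measure_pmf.expectation (walk_pmf k \<sigma> m)
        (indicator {T. visible k (x + T) \<and> visible k (x + T + unit_vec j)}))"
    unfolding walk_pmf_def integral_map_pmf ..
  also have "\<dots> = measure_pmf.expectation ?S
      (\<lambda>j. measure_pmf.prob (walk_pmf k \<sigma> m) {T. visible k (x + T) \<and> visible k (x + T + unit_vec j)})"
    by simp
  finally show ?thesis .
qed

lemma visible_pair_prob_translate_le:
  assumes weights: "\<forall>i. weights_ge k \<beta> (\<sigma> i)"
    and "(\<Sum>c<k. x c) = int s" "(\<Sum>c<k. x' c) = int s" "s + m > 0"
  shows "\<bar>visible_pair_prob k \<sigma> m x' - visible_pair_prob k \<sigma> m x\<bar>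
    \<le> 2 ^ card (prime_factors (int (s + m))) * 2 ^ card (prime_factors (int (Suc (s + m)))) *
       (real (k - 1) / sqrt (\<beta> * (real m + 1)))"
    (is "_ \<le> ?B")
proof -
  let ?S = "step_pmf k (\<sigma> (Suc m))"
  let ?P = "\<lambda>x j. measure_pmf.prob (walk_pmf k \<sigma> m) {T. visible k (x + T) \<and> visible k (x + T + unit_vec j)}"
  have adm: "\<forall>i. admissible_type k (\<sigma> i)"
    using weights by (simp add: weights_ge_def)
  have "finite (set_pmf ?S)"
    using adm by (intro finite_subset[OF set_pmf_step_pmf]) auto
  then have int: "integrable (measure_pmf ?S) f" for f :: "nat \<Rightarrow> real"
    by (rule integrable_measure_pmf_finite)
  have "\<bar>visible_pair_prob k \<sigma> m x' - visible_pair_prob k \<sigma> m x\<bar> = \<bar>measure_pmf.expectation ?S (\<lambda>j. ?P x' j - ?P x j)\<bar>"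
    unfolding visible_pair_prob_eq[OF adm] using int by simp
  also have "\<dots> \<le> measure_pmf.expectation ?S (\<lambda>j. ?B)"
  proof (rule order.trans[OF integral_abs_bound expectation_mono_pmf[OF \<open>finite (set_pmf ?S)\<close>]])
    fix j assume "j \<in> set_pmf ?S"
    then have "j < k"
      using set_pmf_step_pmf adm by blast
    then show "\<bar>?P x' j - ?P x j\<bar> \<le> ?B"
      using assms by (intro prob_visible_pair_translate_le) auto
  qed
  finally show ?thesis
    by simp
qed

lemma expectation_pair_ind_after_prefix:
  assumes adm: "\<forall>i. admissible_type k (\<sigma> i)"
  shows "measure_pmf.expectation (steps_pmf k \<sigma> (Suc s + Suc m))
           (\<lambda>js. f (take (Suc s) js) * pair_ind k (Suc s + m) js) =
         measure_pmf.expectation (steps_pmf k \<sigma> (Suc s))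
           (\<lambda>u. f u * visible_pair_prob k (\<lambda>i. \<sigma> (i + Suc s)) m (walk_pos u (Suc s)))"
proof -
  let ?V = "steps_pmf k (\<lambda>i. \<sigma> (i + Suc s)) (Suc m)"
  have "finite (set_pmf ?V)"
    using adm by (intro finite_set_pmf_steps_pmf) simp
  have pointwise: "f (take (Suc s) (u @ v)) * pair_ind k (Suc s + m) (u @ v) = f u *
      indicator {v. visible k (walk_pos u (Suc s) + walk_pos v m) \<and>
        visible k (walk_pos u (Suc s) + walk_pos v (Suc m))} v"
    if "u \<in> set_pmf (steps_pmf k \<sigma> (Suc s))" for u v
    using walk_pos_append[of u v m] walk_pos_append[of u v "Suc m"] length_steps_pmf[OF that]
    by (simp add: pair_ind_def X_ind_def indicator_def)
  have "measure_pmf.expectation (steps_pmf k \<sigma> (Suc s + Suc m))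
           (\<lambda>js. f (take (Suc s) js) * pair_ind k (Suc s + m) js) =
        measure_pmf.expectation (steps_pmf k \<sigma> (Suc s)) (\<lambda>u. measure_pmf.expectation (map_pmf (\<lambda>v. u @ v) ?V)
           (\<lambda>js. f (take (Suc s) js) * pair_ind k (Suc s + m) js))"
    unfolding steps_pmf_add using \<open>finite (set_pmf ?V)\<close>
    by (intro expectation_bind_pmf) (simp_all add: finite_set_pmf_steps_pmf[OF adm] del: steps_pmf.simps)
  also have "\<dots> = measure_pmf.expectation (steps_pmf k \<sigma> (Suc s))
           (\<lambda>u. f u * visible_pair_prob k (\<lambda>i. \<sigma> (i + Suc s)) m (walk_pos u (Suc s)))"
    unfolding integral_map_pmf
  proof (rule expectation_cong_pmf)
    fix u assume u: "u \<in> set_pmf (steps_pmf k \<sigma> (Suc s))"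
    have "measure_pmf.expectation ?V (\<lambda>v. f (take (Suc s) (u @ v)) * pair_ind k (Suc s + m) (u @ v)) =
        measure_pmf.expectation ?V (\<lambda>v. f u * indicator {v. visible k (walk_pos u (Suc s) + walk_pos v m) \<and>
          visible k (walk_pos u (Suc s) + walk_pos v (Suc m))} v)"
      by (rule expectation_cong_pmf) (rule pointwise[OF u])
    then show "measure_pmf.expectation ?V (\<lambda>v. f (take (Suc s) (u @ v)) * pair_ind k (Suc s + m) (u @ v)) =
        f u * visible_pair_prob k (\<lambda>i. \<sigma> (i + Suc s)) m (walk_pos u (Suc s))"
      by (simp add: visible_pair_prob_def del: steps_pmf.simps)
  qed
  finally show ?thesis .
qed

lemma expectation_pair_ind_conditional:
  assumes adm: "\<forall>i. admissible_type k (\<sigma> i)" and "s < s'" "s' \<le> n"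
  shows "measure_pmf.expectation (steps_pmf k \<sigma> (Suc n)) (\<lambda>js. f (take (Suc s) js) * pair_ind k s' js) =
         measure_pmf.expectation (steps_pmf k \<sigma> (Suc s))
           (\<lambda>u. f u * visible_pair_prob k (\<lambda>i. \<sigma> (i + Suc s)) (s' - Suc s) (walk_pos u (Suc s)))"
proof -
  define m where "m = s' - Suc s"
  have s': "s' = Suc s + m" "Suc s' = Suc s + Suc m"
    using \<open>s < s'\<close> by (simp_all add: m_def)
  have "measure_pmf.expectation (steps_pmf k \<sigma> (Suc n)) (\<lambda>js. f (take (Suc s) js) * pair_ind k s' js) =
      measure_pmf.expectation (steps_pmf k \<sigma> (Suc s + Suc m))
        (\<lambda>js. f (take (Suc s) js) * pair_ind k (Suc s + m) js)"
    using expectation_pair_ind_prefix[where s = s' and N = "Suc s'" and n = "Suc n"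
        and f = "\<lambda>js. f (take (Suc s) js)"] assms(2,3)
    by (simp add: s' min_def)
  also have "\<dots> = measure_pmf.expectation (steps_pmf k \<sigma> (Suc s))
      (\<lambda>u. f u * visible_pair_prob k (\<lambda>i. \<sigma> (i + Suc s)) m (walk_pos u (Suc s)))"
    by (rule expectation_pair_ind_after_prefix[OF adm])
  finally show ?thesis
    unfolding m_def .
qed

lemma covariance_pair_ind_le:
  assumes weights: "\<forall>i. weights_ge k \<beta> (\<sigma> i)" and "s < s'" "s' \<le> n"
  shows "\<bar>measure_pmf.expectation (steps_pmf k \<sigma> (Suc n)) (\<lambda>js. pair_ind k s js * pair_ind k s' js) -
          measure_pmf.expectation (steps_pmf k \<sigma> (Suc n)) (pair_ind k s) *
          measure_pmf.expectation (steps_pmf k \<sigma> (Suc n)) (pair_ind k s')\<bar>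
     \<le> 2 ^ card (prime_factors (int s')) * 2 ^ card (prime_factors (int (Suc s'))) *
        (real (k - 1) / sqrt (\<beta> * real (s' - s)))"
proof -
  let ?E = "measure_pmf.expectation (steps_pmf k \<sigma> (Suc n))" and ?U = "steps_pmf k \<sigma> (Suc s)"
  define G where "G = (\<lambda>u. visible_pair_prob k (\<lambda>i. \<sigma> (i + Suc s)) (s' - Suc s) (walk_pos u (Suc s)))"
  have adm: "\<forall>i. admissible_type k (\<sigma> i)"
    using weights by (simp add: weights_ge_def)
  \<comment> \<open>Conditioned on the first \<open>s + 1\<close> steps, \<open>X\<^sub>s X\<^sub>s\<^sub>+\<^sub>1\<close> is fixed and \<open>X\<^sub>s\<^sub>' X\<^sub>s\<^sub>'\<^sub>+\<^sub>1\<close> has mean \<open>G\<close>.\<close>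
  have E\<^sub>1: "?E (\<lambda>js. pair_ind k s js * pair_ind k s' js) = measure_pmf.expectation ?U (\<lambda>u. pair_ind k s u * G u)"
    using expectation_pair_ind_conditional[OF adm assms(2,3), of "pair_ind k s"] by (simp add: pair_ind_take G_def)
  have E\<^sub>2: "?E (pair_ind k s') = measure_pmf.expectation ?U G"
    using expectation_pair_ind_conditional[OF adm assms(2,3), of "\<lambda>_. 1"] by (simp add: G_def)
  have E\<^sub>3: "?E (pair_ind k s) = measure_pmf.expectation ?U (pair_ind k s)"
    using expectation_pair_ind_prefix[where s = s and N = "Suc s" and n = "Suc n" and f = "\<lambda>_. 1"] assms(2,3)
    by simp
  have sum: "(\<Sum>c<k. walk_pos u (Suc s) c) = int (Suc s)" if "u \<in> set_pmf ?U" for u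
    using sum_walk_pos[OF set_pmf_steps_pmf[OF adm that]] length_steps_pmf[OF that] by simp
  have "\<bar>G u - G u'\<bar> \<le> 2 ^ card (prime_factors (int s')) * 2 ^ card (prime_factors (int (Suc s'))) *
        (real (k - 1) / sqrt (\<beta> * real (s' - s)))"
    if "u \<in> set_pmf ?U" "u' \<in> set_pmf ?U" for u u'
    using visible_pair_prob_translate_le[where \<sigma> = "\<lambda>i. \<sigma> (i + Suc s)" and m = "s' - Suc s",
        OF _ sum[OF that(2)] sum[OF that(1)]] weights \<open>s < s'\<close>
    by (simp add: G_def Suc_diff_Suc of_nat_diff)
  then show ?thesis
    unfolding E\<^sub>1 E\<^sub>2 E\<^sub>3
    by (intro covariance_le_oscillation[OF finite_set_pmf_steps_pmf[OF adm]] pair_ind_bounds)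
qed

lemma covariance_pair_ind_le_uniform:
  assumes weights: "\<forall>i. weights_ge k \<beta> (\<sigma> i)"
    and K: "\<forall>j. j \<ge> 1 \<longrightarrow> 2 ^ card (prime_factors (int j)) \<le> K * real j powr \<eta>" "K \<ge> 0" "\<eta> \<ge> 0"
    and "s < s'" "s' \<le> n"
  shows "measure_pmf.expectation (steps_pmf k \<sigma> (Suc n)) (\<lambda>js. pair_ind k s js * pair_ind k s' js) -
          measure_pmf.expectation (steps_pmf k \<sigma> (Suc n)) (pair_ind k s) *
          measure_pmf.expectation (steps_pmf k \<sigma> (Suc n)) (pair_ind k s')
     \<le> K\<^sup>2 * (real (k - 1) / sqrt \<beta>) * (real n + 1) powr (2 * \<eta>) / sqrt \<bar>real s - real s'\<bar>"
proof -
  have "\<beta> > 0"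
    using weights by (simp add: weights_ge_def)
  have pow: "2 ^ card (prime_factors (int j)) \<le> K * (real n + 1) powr \<eta>" if "1 \<le> j" "j \<le> Suc n" for j
    using K that by (intro order.trans[OF K(1)[rule_format] mult_left_mono] powr_mono2) auto
  have "measure_pmf.expectation (steps_pmf k \<sigma> (Suc n)) (\<lambda>js. pair_ind k s js * pair_ind k s' js) -
          measure_pmf.expectation (steps_pmf k \<sigma> (Suc n)) (pair_ind k s) *
          measure_pmf.expectation (steps_pmf k \<sigma> (Suc n)) (pair_ind k s')
      \<le> 2 ^ card (prime_factors (int s')) * 2 ^ card (prime_factors (int (Suc s'))) *
        (real (k - 1) / sqrt (\<beta> * real (s' - s)))"
    using covariance_pair_ind_le[OF weights assms(5,6)] by linarith
  also have "\<dots> \<le> (K * (real n + 1) powr \<eta>) * (K * (real n + 1) powr \<eta>) * (real (k - 1) / sqrt (\<beta> * real (s' - s)))"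
    using assms \<open>\<beta> > 0\<close> by (intro mult_right_mono mult_mono pow) auto
  also have "\<dots> = K\<^sup>2 * (real (k - 1) / sqrt \<beta>) * (real n + 1) powr (2 * \<eta>) / sqrt \<bar>real s - real s'\<bar>"
  proof -
    have "sqrt (\<beta> * real (s' - s)) = sqrt \<beta> * sqrt \<bar>real s - real s'\<bar>"
      using \<open>s < s'\<close> by (simp add: real_sqrt_mult of_nat_diff)
    moreover have "(real n + 1) powr \<eta> * (real n + 1) powr \<eta> = (real n + 1) powr (2 * \<eta>)"
      by (simp add: powr_add[symmetric])
    ultimately show ?thesis
      by (simp add: power2_eq_square field_simps)
  qed
  finally show ?thesis .
qed

lemma variance_R_bar_le:
  fixes n :: nat
  assumes weights: "\<forall>i. weights_ge k \<beta> (\<sigma> i)"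
    and K: "\<forall>j. j \<ge> 1 \<longrightarrow> 2 ^ card (prime_factors (int j)) \<le> K * real j powr \<eta>" "K \<ge> 0" "\<eta> \<ge> 0"
  defines "B \<equiv> K\<^sup>2 * (real (k - 1) / sqrt \<beta>) * (real n + 1) powr (2 * \<eta>)"
  shows "measure_pmf.variance (steps_pmf k \<sigma> (Suc n)) (R_bar k n) \<le> (1 + 4 * B * sqrt (real n)) / real n"
proof -
  let ?E = "measure_pmf.expectation (steps_pmf k \<sigma> (Suc n))"
  define cov where "cov s s' = ?E (\<lambda>js. pair_ind k s js * pair_ind k s' js) - ?E (pair_ind k s) * ?E (pair_ind k s')"
    for s s'
  have fin: "finite (set_pmf (steps_pmf k \<sigma> (Suc n)))"
    using weights by (intro finite_set_pmf_steps_pmf) (simp add: weights_ge_def)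
  have "\<beta> > 0"
    using weights by (simp add: weights_ge_def)
  have "R_bar k n = (\<lambda>js. (1 / real n) * (\<Sum>s\<in>{1..n}. pair_ind k s js))"
    by (simp add: fun_eq_iff R_bar_def pair_ind_def)
  then have variance: "measure_pmf.variance (steps_pmf k \<sigma> (Suc n)) (R_bar k n) =
      (1 / real n)\<^sup>2 * (\<Sum>s\<in>{1..n}. \<Sum>s'\<in>{1..n}. cov s s')"
    unfolding cov_def by (simp only: variance_scaled_sum[OF fin])
  have "(\<Sum>s\<in>{1..n}. \<Sum>s'\<in>{1..n}. cov s s') \<le> real n * (1 + 4 * B * sqrt (real n))"
  proof (rule sum_sum_le_inverse_sqrt_dist)
    fix s
    have "\<bar>cov s s\<bar> \<le> 1"
      unfolding cov_def
    proof (rule covariance_le_oscillation[OF fin])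
      fix x y
      show "\<bar>pair_ind k s x - pair_ind k s y\<bar> \<le> 1"
        using pair_ind_bounds[of k s x] pair_ind_bounds[of k s y] by linarith
    qed (rule pair_ind_bounds)
    then show "cov s s \<le> 1"
      by simp
  next
    fix s s' assume "s \<in> {1..n}" "s' \<in> {1..n}" "s \<noteq> s'"
    then show "cov s s' \<le> B / sqrt \<bar>real s - real s'\<bar>"
      using covariance_pair_ind_le_uniform[OF weights K, of s s' n] covariance_pair_ind_le_uniform[OF weights K, of s' s n]
      by (cases "s < s'") (auto simp: B_def cov_def mult.commute abs_minus_commute)
  qed (use \<open>\<beta> > 0\<close> in \<open>simp add: B_def\<close>)
  then have "(1 / real n)\<^sup>2 * (\<Sum>s\<in>{1..n}. \<Sum>s'\<in>{1..n}. cov s s') \<le>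
      (1 / real n)\<^sup>2 * (real n * (1 + 4 * B * sqrt (real n)))"
    by (rule mult_left_mono) simp
  also have "\<dots> = (1 + 4 * B * sqrt (real n)) / real n"
    by (cases "n = 0") (simp_all add: power2_eq_square)
  finally show ?thesis
    unfolding variance .
qed

theorem proposition5p2:
  fixes A :: "(nat \<Rightarrow> real) set" and k q :: nat and \<epsilon> :: real
  assumes "finite A" and "card A = q" and "q \<ge> 1" and "k \<ge> 2"
    and "\<forall>\<alpha>\<in>A. admissible_type k \<alpha>"
    and "\<epsilon> > 0"
  shows "\<exists>C N. \<forall>\<sigma> :: nat \<Rightarrow> nat \<Rightarrow> real. (\<forall>i. \<sigma> i \<in> A) \<longrightarrow>
           (\<forall>n\<ge>N. measure_pmf.variance (steps_pmf k \<sigma> (Suc n)) (R_bar k n)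
                      \<le> C * real n powr (-1/2 + \<epsilon>))"
proof -
  obtain \<beta> where "\<beta> > 0" and \<beta>: "\<forall>\<alpha>\<in>A. weights_ge k \<beta> \<alpha>"
    using exists_weights_ge[OF assms(1,5)] by blast
  obtain K where K: "K > 0" "\<forall>j. j \<ge> 1 \<longrightarrow> 2 ^ card (prime_factors (int j)) \<le> K * real j powr (\<epsilon> / 2)"
    using two_pow_card_prime_factors_le[of "\<epsilon> / 2"] \<open>\<epsilon> > 0\<close> by auto
  define c where "c = 4 * (K\<^sup>2 * (real (k - 1) / sqrt \<beta>))"
  have "c \<ge> 0"
    using \<open>\<beta> > 0\<close> by (simp add: c_def)
  have "measure_pmf.variance (steps_pmf k \<sigma> (Suc n)) (R_bar k n) \<le> (1 + c * 2 powr \<epsilon>) * real n powr (-1/2 + \<epsilon>)"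
    if "\<forall>i. \<sigma> i \<in> A" "n \<ge> 1" for \<sigma> n
  proof -
    have "measure_pmf.variance (steps_pmf k \<sigma> (Suc n)) (R_bar k n) \<le>
        (1 + c * (real n + 1) powr \<epsilon> * sqrt (real n)) / real n"
      using variance_R_bar_le[of k \<beta> \<sigma> K "\<epsilon> / 2" n] \<beta> K that(1) \<open>\<epsilon> > 0\<close> by (simp add: c_def mult_ac)
    also have "\<dots> \<le> (1 + c * 2 powr \<epsilon>) * real n powr (-1/2 + \<epsilon>)"
      using that(2) \<open>c \<ge> 0\<close> \<open>\<epsilon> > 0\<close> by (intro inverse_add_powr_sqrt_le) auto
    finally show ?thesis .
  qed
  then show ?thesis
    by blast
qed

end
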